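(* Let $R$ be a $\Gamma$-ring, let $R_n$ be the discrete $\Gamma$-ring of $n$-simplices ($R_n(K)=R(K)_n$), and let $G_n$ be the group of invertible elements of the monoid $R_n[1]$; these form a simplicial group $G_\ast$. Let $G_\ast$ act on the simplicial set $FDL(R)_\ast$ (whose $n$-simplices are the formal difference laws in $R_n$) by conjugation $a\cdot r=a\,r\,a^{-1}$, and on the simplicial set $\Gamma(H\mathbb Z,R)_\ast$ (whose $n$-simplices are the multiplicative maps $H\mathbb Z\to R_n$) by conjugation $(a\cdot\phi)(x)=a\,\phi(x)\,a^{-1}$. Then the homotopy orbit simplicial sets $FDL(R)_{hG_\ast}$ and $\Gamma(H\mathbb Z,R)_{hG_\ast}$ are isomorphic.
   Context: Let $[n]=\{0,1,\dots,n\}$, pointed at $0$. A $\Gamma$-space is a functor $F$ from the finite pointed sets $[n]$ (with pointed maps) to pointed simplicial sets with $F[0]$ a point; for a pointed map $f$ we write $f$ also for $F(f)$; $\Sigma_n$ acts on $F[n]$ via permutations of $\{1,\dots,n\}$. We identify $[n]\wedge[m]$ with $[nm]$ via $i\wedge j\mapsto (j-1)n+i$, so for $a\in R[1]$ and $x\in R(K)$ we have $ax, xa\in R(K)$. A $\Gamma$-ring is a $\Gamma$-space $R$ with unit $1\in R[1]$ and associative unital multiplication given by natural maps $R(K)\wedge R(L)\to R(K\wedge L)$, $p\wedge q\mapsto pq$; it is discrete if all $R(K)$ are sets; $0\in R[1]$ denotes the basepoint. For $x\in R[2]$, $x^k\in R[2^k]$ is the $k$-fold product. A multiplicative map of $\Gamma$-rings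 is a natural transformation preserving units and products. Maps: $p^n_i:[n]\to[n-1]$, $p^n_i(j)=j$ ($j<i$), $p^n_i(i)=0$, $p^n_i(j)=j-1$ ($j>i$); for $1\le i<j\le n$ and $1\le k\le n-1$, $s^n_{i,j,k}:[n]\to[n-1]$ sends $0\mapsto0$, $i,j\mapsto k$, and the remaining elements order-preservingly and bijectively onto $\{1,\dots,n-1\}\setminus\{k\}$; $d^n_j:[n-1]\to[n]$ is the order-preserving injection missing $j$. $H\mathbb{Z}$ is the $\Gamma$-ring with $H\mathbb{Z}(K)$ the reduced free abelian group on $K$, pointed maps acting by summing coefficients along fibres, unit the inclusion of generators, multiplication $(\sum a_k k)(\sum b_l l)=\sum a_kb_l (k\wedge l)$. For $k\ge1$, split $\{1,\dots,2^k\}=A_+\sqcup A_-$ where $i\in A_+$ iff the binary expansion of $i-1$ has an even number of digits $1$. The special action of $\Sigma_{2^{k-1}}\times\Sigma_{2^{k-1}}$ on $F[2^k]$ is the action of the group of permutations of $\{1,\dots,2^k\}$ preserving $A_+$ and $A_-$. Let $\sigma$ be the nontrivial element of $\Sigma_2$. A formal difference law in a discrete $\Gamma$-ring $R$ is $r\in R[2]$ such that: (1) $p^2_2(r)=1$ and $s^2_{1,2,1}(r)=0$; (2) $p^2_1(r)\,r=r\,p^2_1(r)=\sigma(r)$ in $R[2]$; (3) for every $k\ge1$, $r^k$ is fixed under the special action; (4) for every $k\ge1$, all $1\le i<j\le 2^k$ with one of $i,j$ in $A_+$ and the other in $A_-$, and all $1\le l\le 2^k-1$: $s^{2^k}_{i,j,l}(r^k)=d^{2^k-1}_l\,p^{2^k-1}_i\,p^{2^k}_j(r^k)$.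 *)

theory Defs
  imports Main
begin

text \<open>A simplicial set, given by its sets of n-simplices and face/degeneracy maps.
  sface X n i : X_n -> X_(n-1)  (1 <= n, i <= n);  sdeg X n i : X_n -> X_(n+1)  (i <= n).\<close>

record 'a sset =
  scar  :: "nat \<Rightarrow> 'a set"
  sface :: "nat \<Rightarrow> nat \<Rightarrow> 'a \<Rightarrow> 'a"
  sdeg  :: "nat \<Rightarrow> nat \<Rightarrow> 'a \<Rightarrow> 'a"

definition simplicial_set :: "'a sset \<Rightarrow> bool" where
  "simplicial_set X \<longleftrightarrow>
    (\<forall>n i x. 1 \<le> n \<and> i \<le> n \<and> x \<in> scar X n \<longrightarrow> sface X n i x \<in> scar X (n - 1)) \<and>
    (\<forall>n i x. i \<le> n \<and> x \<in> scar X n \<longrightarrow> sdeg X n i x \<in> scar X (Suc n)) \<and>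
    (\<forall>n i j x. 2 \<le> n \<and> i < j \<and> j \<le> n \<and> x \<in> scar X n \<longrightarrow>
       sface X (n - 1) i (sface X n j x) = sface X (n - 1) (j - 1) (sface X n i x)) \<and>
    (\<forall>n i j x. i \<le> j \<and> j \<le> n \<and> x \<in> scar X n \<longrightarrow>
       sdeg X (Suc n) i (sdeg X n j x) = sdeg X (Suc n) (Suc j) (sdeg X n i x)) \<and>
    (\<forall>n i j x. j \<le> n \<and> i \<le> Suc n \<and> x \<in> scar X n \<longrightarrow>
       sface X (Suc n) i (sdeg X n j x) =
         (if i < j then sdeg X (n - 1) (j - 1) (sface X n i x)
          else if i = j \<or> i = Suc j then x
          else sdeg X (n - 1) j (sface X n (i - 1) x)))"

definition sset_iso :: "'a sset \<Rightarrow> 'b sset \<Rightarrow> bool" where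
  "sset_iso X Y \<longleftrightarrow> (\<exists>f :: nat \<Rightarrow> 'a \<Rightarrow> 'b.
     (\<forall>n. bij_betw (f n) (scar X n) (scar Y n)) \<and>
     (\<forall>n i x. 1 \<le> n \<and> i \<le> n \<and> x \<in> scar X n \<longrightarrow>
        f (n - 1) (sface X n i x) = sface Y n i (f n x)) \<and>
     (\<forall>n i x. i \<le> n \<and> x \<in> scar X n \<longrightarrow>
        f (Suc n) (sdeg X n i x) = sdeg Y n i (f n x)))"

text \<open>gelts R m n = the set of n-simplices of R[m];
  gmap R m k f n : R[m]_n -> R[k]_n  for a pointed map f : [m] -> [k];
  gface R m n i, gdeg R m n i : faces/degeneracies of R[m];
  gbase R m n : basepoint of R[m]_n;  gone R n : the unit 1 in R[1]_n;
  gmul R m k n : R[m]_n x R[k]_n -> R[mk]_n  (levelwise smash product).\<close>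

record 'a gring =
  gelts :: "nat \<Rightarrow> nat \<Rightarrow> 'a set"
  gmap  :: "nat \<Rightarrow> nat \<Rightarrow> (nat \<Rightarrow> nat) \<Rightarrow> nat \<Rightarrow> 'a \<Rightarrow> 'a"
  gface :: "nat \<Rightarrow> nat \<Rightarrow> nat \<Rightarrow> 'a \<Rightarrow> 'a"
  gdeg  :: "nat \<Rightarrow> nat \<Rightarrow> nat \<Rightarrow> 'a \<Rightarrow> 'a"
  gbase :: "nat \<Rightarrow> nat \<Rightarrow> 'a"
  gone  :: "nat \<Rightarrow> 'a"
  gmul  :: "nat \<Rightarrow> nat \<Rightarrow> nat \<Rightarrow> 'a \<Rightarrow> 'a \<Rightarrow> 'a"

definition glevel :: "'a gring \<Rightarrow> nat \<Rightarrow> 'a sset" where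
  "glevel R m = \<lparr>scar = gelts R m, sface = gface R m, sdeg = gdeg R m\<rparr>"

text \<open>Pointed maps [m] -> [k] (only the values on {0..m} matter).\<close>

definition pointed_map :: "nat \<Rightarrow> nat \<Rightarrow> (nat \<Rightarrow> nat) \<Rightarrow> bool" where
  "pointed_map m k f \<longleftrightarrow> f 0 = 0 \<and> (\<forall>i\<le>m. f i \<le> k)"

text \<open>The smash f /\ g : [m] /\ [m'] -> [k] /\ [k'] under the identification
  [n] /\ [m] = [nm],  i /\ j |-> (j-1) n + i.\<close>

definition smash_map :: "nat \<Rightarrow> nat \<Rightarrow> nat \<Rightarrow> (nat \<Rightarrow> nat) \<Rightarrow> (nat \<Rightarrow> nat) \<Rightarrow> nat \<Rightarrow> nat" where
  "smash_map m m' k f g p =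
    (if p = 0 \<or> m * m' < p then 0
     else (let i = (p - 1) mod m + 1; j = (p - 1) div m + 1 in
           if f i = 0 \<or> g j = 0 then 0 else (g j - 1) * k + f i))"

definition is_gamma_ring :: "'a gring \<Rightarrow> bool" where
  "is_gamma_ring R \<longleftrightarrow>
    (\<forall>m. simplicial_set (glevel R m)) \<and>
    (\<forall>m n. gbase R m n \<in> gelts R m n) \<and>
    (\<forall>n. gelts R 0 n = {gbase R 0 n}) \<and>
    (\<forall>m n i. 1 \<le> n \<and> i \<le> n \<longrightarrow> gface R m n i (gbase R m n) = gbase R m (n - 1)) \<and>
    (\<forall>m n i. i \<le> n \<longrightarrow> gdeg R m n i (gbase R m n) = gbase R m (Suc n)) \<and>
    (\<forall>m k f n x. pointed_map m k f \<and> x \<in> gelts R m n \<longrightarrow> gmap R m k f n x \<in> gelts R k n) \<and>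
    (\<forall>m k f n. pointed_map m k f \<longrightarrow> gmap R m k f n (gbase R m n) = gbase R k n) \<and>
    (\<forall>m k f n i x. pointed_map m k f \<and> 1 \<le> n \<and> i \<le> n \<and> x \<in> gelts R m n \<longrightarrow>
        gface R k n i (gmap R m k f n x) = gmap R m k f (n - 1) (gface R m n i x)) \<and>
    (\<forall>m k f n i x. pointed_map m k f \<and> i \<le> n \<and> x \<in> gelts R m n \<longrightarrow>
        gdeg R k n i (gmap R m k f n x) = gmap R m k f (Suc n) (gdeg R m n i x)) \<and>
    (\<forall>m k f f' n x. (\<forall>i\<le>m. f i = f' i) \<and> x \<in> gelts R m n \<longrightarrow>
        gmap R m k f n x = gmap R m k f' n x) \<and>
    (\<forall>m n x. x \<in> gelts R m n \<longrightarrow> gmap R m m id n x = x) \<and>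
    (\<forall>m k l f g n x. pointed_map m k f \<and> pointed_map k l g \<and> x \<in> gelts R m n \<longrightarrow>
        gmap R k l g n (gmap R m k f n x) = gmap R m l (g \<circ> f) n x) \<and>
    (\<forall>m k n x y. x \<in> gelts R m n \<and> y \<in> gelts R k n \<longrightarrow> gmul R m k n x y \<in> gelts R (m * k) n) \<and>
    (\<forall>m k n y. y \<in> gelts R k n \<longrightarrow> gmul R m k n (gbase R m n) y = gbase R (m * k) n) \<and>
    (\<forall>m k n x. x \<in> gelts R m n \<longrightarrow> gmul R m k n x (gbase R k n) = gbase R (m * k) n) \<and>
    (\<forall>m k n i x y. 1 \<le> n \<and> i \<le> n \<and> x \<in> gelts R m n \<and> y \<in> gelts R k n \<longrightarrow>
        gface R (m * k) n i (gmul R m k n x y) = gmul R m k (n - 1) (gface R m n i x) (gface R k n i y)) \<and>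
    (\<forall>m k n i x y. i \<le> n \<and> x \<in> gelts R m n \<and> y \<in> gelts R k n \<longrightarrow>
        gdeg R (m * k) n i (gmul R m k n x y) = gmul R m k (Suc n) (gdeg R m n i x) (gdeg R k n i y)) \<and>
    (\<forall>m m' k k' f g n x y. pointed_map m m' f \<and> pointed_map k k' g \<and>
        x \<in> gelts R m n \<and> y \<in> gelts R k n \<longrightarrow>
        gmap R (m * k) (m' * k') (smash_map m k m' f g) n (gmul R m k n x y) =
        gmul R m' k' n (gmap R m m' f n x) (gmap R k k' g n y)) \<and>
    (\<forall>n. gone R n \<in> gelts R 1 n) \<and>
    (\<forall>n i. 1 \<le> n \<and> i \<le> n \<longrightarrow> gface R 1 n i (gone R n) = gone R (n - 1)) \<and>
    (\<forall>n i. i \<le> n \<longrightarrow> gdeg R 1 n i (gone R n) = gone R (Suc n)) \<and>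
    (\<forall>m n x. x \<in> gelts R m n \<longrightarrow> gmul R 1 m n (gone R n) x = x) \<and>
    (\<forall>m n x. x \<in> gelts R m n \<longrightarrow> gmul R m 1 n x (gone R n) = x) \<and>
    (\<forall>m k l n x y z. x \<in> gelts R m n \<and> y \<in> gelts R k n \<and> z \<in> gelts R l n \<longrightarrow>
        gmul R (m * k) l n (gmul R m k n x y) z = gmul R m (k * l) n x (gmul R k l n y z))"

text \<open>HZ[m] = reduced free abelian group on [m], i.e. functions nat => int supported in {1..m}.\<close>

definition hz_elts :: "nat \<Rightarrow> (nat \<Rightarrow> int) set" where
  "hz_elts m = {v. \<forall>i. (i = 0 \<or> m < i) \<longrightarrow> v i = 0}"

definition hz_map :: "nat \<Rightarrow> nat \<Rightarrow> (nat \<Rightarrow> nat) \<Rightarrow> (nat \<Rightarrow> int) \<Rightarrow> (nat \<Rightarrow> int)" where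
  "hz_map m k f v = (\<lambda>j. if 1 \<le> j \<and> j \<le> k then (\<Sum>i\<in>{i. 1 \<le> i \<and> i \<le> m \<and> f i = j}. v i) else 0)"

definition hz_mul :: "nat \<Rightarrow> nat \<Rightarrow> (nat \<Rightarrow> int) \<Rightarrow> (nat \<Rightarrow> int) \<Rightarrow> (nat \<Rightarrow> int)" where
  "hz_mul m k v w = (\<lambda>p. if 1 \<le> p \<and> p \<le> m * k then v ((p - 1) mod m + 1) * w ((p - 1) div m + 1) else 0)"

definition hz_one :: "nat \<Rightarrow> int" where
  "hz_one = (\<lambda>i. if i = 1 then 1 else 0)"

text \<open>Multiplicative maps HZ -> R_n (R_n the discrete Gamma-ring of n-simplices),
  as families phi m : HZ[m] -> R[m]_n (extensional: undefined off HZ[m]).\<close>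

definition mult_map :: "'a gring \<Rightarrow> nat \<Rightarrow> (nat \<Rightarrow> (nat \<Rightarrow> int) \<Rightarrow> 'a) \<Rightarrow> bool" where
  "mult_map R n \<phi> \<longleftrightarrow>
    (\<forall>m v. v \<in> hz_elts m \<longrightarrow> \<phi> m v \<in> gelts R m n) \<and>
    (\<forall>m v. v \<notin> hz_elts m \<longrightarrow> \<phi> m v = undefined) \<and>
    (\<forall>m. \<phi> m (\<lambda>_. 0) = gbase R m n) \<and>
    (\<forall>m k f v. pointed_map m k f \<and> v \<in> hz_elts m \<longrightarrow>
        \<phi> k (hz_map m k f v) = gmap R m k f n (\<phi> m v)) \<and>
    \<phi> 1 hz_one = gone R n \<and>
    (\<forall>m k v w. v \<in> hz_elts m \<and> w \<in> hz_elts k \<longrightarrow>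
        \<phi> (m * k) (hz_mul m k v w) = gmul R m k n (\<phi> m v) (\<phi> k w))"

definition hom_sset :: "'a gring \<Rightarrow> (nat \<Rightarrow> (nat \<Rightarrow> int) \<Rightarrow> 'a) sset" where
  "hom_sset R = \<lparr>scar = (\<lambda>n. {\<phi>. mult_map R n \<phi>}),
     sface = (\<lambda>n i \<phi>. (\<lambda>m v. if v \<in> hz_elts m then gface R m n i (\<phi> m v) else undefined)),
     sdeg = (\<lambda>n i \<phi>. (\<lambda>m v. if v \<in> hz_elts m then gdeg R m n i (\<phi> m v) else undefined))\<rparr>"

definition p_map :: "nat \<Rightarrow> nat \<Rightarrow> nat" where
  "p_map i = (\<lambda>j. if j < i then j else if j = i then 0 else j - 1)"

definition s_map :: "nat \<Rightarrow> nat \<Rightarrow> nat \<Rightarrow> nat \<Rightarrow> nat" where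
  "s_map i j k = (\<lambda>t. if t = 0 then 0 else if t = i \<or> t = j then k
     else (let r = t - (if i < t then 1 else 0) - (if j < t then 1 else 0)
           in if r < k then r else r + 1))"

definition d_map :: "nat \<Rightarrow> nat \<Rightarrow> nat" where
  "d_map l = (\<lambda>t. if t < l then t else t + 1)"

definition swap2 :: "nat \<Rightarrow> nat" where
  "swap2 = (\<lambda>t. if t = 1 then 2 else if t = 2 then 1 else t)"

fun bitcount :: "nat \<Rightarrow> nat" where
  "bitcount n = (if n = 0 then 0 else n mod 2 + bitcount (n div 2))"

definition in_Aplus :: "nat \<Rightarrow> bool" where
  "in_Aplus i \<longleftrightarrow> even (bitcount (i - 1))"

primrec rpow :: "'a gring \<Rightarrow> nat \<Rightarrow> 'a \<Rightarrow> nat \<Rightarrow> 'a" where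
  "rpow R n r 0 = gone R n"
| "rpow R n r (Suc k) = gmul R (2 ^ k) 2 n (rpow R n r k) r"

definition is_fdl :: "'a gring \<Rightarrow> nat \<Rightarrow> 'a \<Rightarrow> bool" where
  "is_fdl R n r \<longleftrightarrow> r \<in> gelts R 2 n \<and>
    gmap R 2 1 (p_map 2) n r = gone R n \<and>
    gmap R 2 1 (s_map 1 2 1) n r = gbase R 1 n \<and>
    gmul R 1 2 n (gmap R 2 1 (p_map 1) n r) r = gmap R 2 2 swap2 n r \<and>
    gmul R 2 1 n r (gmap R 2 1 (p_map 1) n r) = gmap R 2 2 swap2 n r \<and>
    (\<forall>k \<pi>. 1 \<le> k \<and> \<pi> 0 = 0 \<and> bij_betw \<pi> {1..2 ^ k} {1..2 ^ k} \<and>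
        (\<forall>i\<in>{1..2 ^ k}. in_Aplus (\<pi> i) = in_Aplus i) \<longrightarrow>
        gmap R (2 ^ k) (2 ^ k) \<pi> n (rpow R n r k) = rpow R n r k) \<and>
    (\<forall>k i j l. 1 \<le> k \<and> 1 \<le> i \<and> i < j \<and> j \<le> 2 ^ k \<and> in_Aplus i \<noteq> in_Aplus j \<and>
        1 \<le> l \<and> l \<le> 2 ^ k - 1 \<longrightarrow>
        gmap R (2 ^ k) (2 ^ k - 1) (s_map i j l) n (rpow R n r k) =
        gmap R (2 ^ k - 2) (2 ^ k - 1) (d_map l) n
          (gmap R (2 ^ k - 1) (2 ^ k - 2) (p_map i) n
            (gmap R (2 ^ k) (2 ^ k - 1) (p_map j) n (rpow R n r k))))"

definition fdl_sset :: "'a gring \<Rightarrow> 'a sset" where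
  "fdl_sset R = \<lparr>scar = (\<lambda>n. {r. is_fdl R n r}), sface = gface R 2, sdeg = gdeg R 2\<rparr>"

definition units :: "'a gring \<Rightarrow> nat \<Rightarrow> 'a set" where
  "units R n = {a \<in> gelts R 1 n. \<exists>b\<in>gelts R 1 n.
      gmul R 1 1 n a b = gone R n \<and> gmul R 1 1 n b a = gone R n}"

definition ginv :: "'a gring \<Rightarrow> nat \<Rightarrow> 'a \<Rightarrow> 'a" where
  "ginv R n a = (THE b. b \<in> gelts R 1 n \<and> gmul R 1 1 n a b = gone R n \<and> gmul R 1 1 n b a = gone R n)"

definition unit_group :: "'a gring \<Rightarrow> 'a sset" where
  "unit_group R = \<lparr>scar = units R, sface = gface R 1, sdeg = gdeg R 1\<rparr>"

definition fdl_act :: "'a gring \<Rightarrow> nat \<Rightarrow> 'a \<Rightarrow> 'a \<Rightarrow> 'a" where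
  "fdl_act R n a r = gmul R 2 1 n (gmul R 1 2 n a r) (ginv R n a)"

definition hom_act :: "'a gring \<Rightarrow> nat \<Rightarrow> 'a \<Rightarrow> (nat \<Rightarrow> (nat \<Rightarrow> int) \<Rightarrow> 'a) \<Rightarrow> (nat \<Rightarrow> (nat \<Rightarrow> int) \<Rightarrow> 'a)" where
  "hom_act R n a \<phi> = (\<lambda>m v. if v \<in> hz_elts m
      then gmul R m 1 n (gmul R 1 m n a (\<phi> m v)) (ginv R n a) else undefined)"

text \<open>X_hG := diagonal of the bisimplicial bar construction B(*, G, X):
  n-simplices (g_1,...,g_n; x) with g_i in G_n, x in X_n;
  d_0 drops g_1, d_i (0<i<n) multiplies g_i g_(i+1), d_n acts by g_n on x
  (after applying the simplicial face d_i to all entries); s_i inserts 1.\<close>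

definition hoorb :: "'b sset \<Rightarrow> 'g sset \<Rightarrow> (nat \<Rightarrow> 'g \<Rightarrow> 'g \<Rightarrow> 'g) \<Rightarrow> (nat \<Rightarrow> 'g)
    \<Rightarrow> (nat \<Rightarrow> 'g \<Rightarrow> 'b \<Rightarrow> 'b) \<Rightarrow> ('g list \<times> 'b) sset" where
  "hoorb X G gm ge act = \<lparr>
     scar = (\<lambda>n. {(gs, x). length gs = n \<and> set gs \<subseteq> scar G n \<and> x \<in> scar X n}),
     sface = (\<lambda>n i (gs, x). (let hs = map (sface G n i) gs; y = sface X n i x in
        if i = 0 then (tl hs, y)
        else if i = n then (butlast hs, act (n - 1) (last hs) y)
        else (take (i - 1) hs @ [gm (n - 1) (hs ! (i - 1)) (hs ! i)] @ drop (i + 1) hs, y))),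
     sdeg = (\<lambda>n i (gs, x). (let hs = map (sdeg G n i) gs in
        (take i hs @ [ge (Suc n)] @ drop i hs, sdeg X n i x)))\<rparr>"

definition hG :: "'a gring \<Rightarrow> 'b sset \<Rightarrow> (nat \<Rightarrow> 'a \<Rightarrow> 'b \<Rightarrow> 'b) \<Rightarrow> ('a list \<times> 'b) sset" where
  "hG R X act = hoorb X (unit_group R) (\<lambda>n. gmul R 1 1 n) (gone R) act"

end

theory Submission
  imports Defs "HOL-Combinatorics.Transposition"
begin

text \<open>
  Fix a simplicial level n.  A multiplicative map phi : HZ -> R_n is determined by
  r = phi(sigma_1) in R[2]_n, sigma_1 = e_1 - e_2, and r is a formal difference law.
  Conversely every formal difference law arises this way: each v in HZ[m] is the
  push-forward f_*(sigma_k) of the sign vector sigma_k in HZ[2^k] (+1 on A_+, -1 on A_-)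
  along some pointed map f : [2^k] -> [m], and phi(v) := f_*(r^k) is well defined.
  For well-definedness, raise two presentations of v to a common k, make both
  sign-separating (no point of A_+ and point of A_- with the same nonzero image) by the
  cancellation axiom, and then pass from one to the other by transpositions that
  preserve A_+ and A_-, which fix r^k by the symmetry axiom.

  The bijection r <-> phi commutes with faces, degeneracies and conjugation by units,
  since all three are levelwise natural multiplicative maps R_n -> R_n'.  A general
  lemma on homotopy orbits, an equivariant isomorphism X -> Y induces X_hG = Y_hG,
  then gives the theorem, which comes last.
\<close>

section \<open>Consequences of the Gamma-ring axioms\<close>

locale gamma_ring = fixes R :: "'a gring" assumes gamma_ring: "is_gamma_ring R"
begin

lemmas axioms = gamma_ring[unfolded is_gamma_ring_def]

lemma levels_simplicial: "simplicial_set (glevel R m)"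
  using axioms by simp

lemma face_closed: "1 \<le> n \<Longrightarrow> i \<le> n \<Longrightarrow> x \<in> gelts R m n \<Longrightarrow> gface R m n i x \<in> gelts R m (n - 1)"
  using levels_simplicial[of m] unfolding simplicial_set_def glevel_def by auto

lemma deg_closed: "i \<le> n \<Longrightarrow> x \<in> gelts R m n \<Longrightarrow> gdeg R m n i x \<in> gelts R m (Suc n)"
  using levels_simplicial[of m] unfolding simplicial_set_def glevel_def by auto

lemma level0_point: "gelts R 0 n = {gbase R 0 n}"
  using axioms by simp

lemma face_base: "1 \<le> n \<Longrightarrow> i \<le> n \<Longrightarrow> gface R m n i (gbase R m n) = gbase R m (n - 1)"
  using axioms by simp

lemma deg_base: "i \<le> n \<Longrightarrow> gdeg R m n i (gbase R m n) = gbase R m (Suc n)"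
  using axioms by simp

lemma gmap_closed: "pointed_map m k f \<Longrightarrow> x \<in> gelts R m n \<Longrightarrow> gmap R m k f n x \<in> gelts R k n"
  using axioms by simp

lemma gmap_base: "pointed_map m k f \<Longrightarrow> gmap R m k f n (gbase R m n) = gbase R k n"
  using axioms by simp

lemma face_gmap: "pointed_map m k f \<Longrightarrow> 1 \<le> n \<Longrightarrow> i \<le> n \<Longrightarrow> x \<in> gelts R m n \<Longrightarrow>
    gface R k n i (gmap R m k f n x) = gmap R m k f (n - 1) (gface R m n i x)"
  using axioms by simp

lemma deg_gmap: "pointed_map m k f \<Longrightarrow> i \<le> n \<Longrightarrow> x \<in> gelts R m n \<Longrightarrow>
    gdeg R k n i (gmap R m k f n x) = gmap R m k f (Suc n) (gdeg R m n i x)"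
  using axioms by simp

lemma gmap_cong: "(\<And>i. i \<le> m \<Longrightarrow> f i = f' i) \<Longrightarrow> x \<in> gelts R m n \<Longrightarrow>
    gmap R m k f n x = gmap R m k f' n x"
  using axioms by (elim conjE) metis

lemma gmap_id: "x \<in> gelts R m n \<Longrightarrow> gmap R m m id n x = x"
  using axioms by simp

lemma gmap_comp: "pointed_map m k f \<Longrightarrow> pointed_map k l g \<Longrightarrow> x \<in> gelts R m n \<Longrightarrow>
    gmap R k l g n (gmap R m k f n x) = gmap R m l (g \<circ> f) n x"
  using axioms by simp

lemma gmul_closed: "x \<in> gelts R m n \<Longrightarrow> y \<in> gelts R k n \<Longrightarrow> gmul R m k n x y \<in> gelts R (m * k) n"
  using axioms by simp

lemma gmul_base_left: "y \<in> gelts R k n \<Longrightarrow> gmul R m k n (gbase R m n) y = gbase R (m * k) n"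
  using axioms by simp

lemma gmul_base_right: "x \<in> gelts R m n \<Longrightarrow> gmul R m k n x (gbase R k n) = gbase R (m * k) n"
  using axioms by simp

lemma face_gmul: "1 \<le> n \<Longrightarrow> i \<le> n \<Longrightarrow> x \<in> gelts R m n \<Longrightarrow> y \<in> gelts R k n \<Longrightarrow>
    gface R (m * k) n i (gmul R m k n x y) = gmul R m k (n - 1) (gface R m n i x) (gface R k n i y)"
  using axioms by simp

lemma deg_gmul: "i \<le> n \<Longrightarrow> x \<in> gelts R m n \<Longrightarrow> y \<in> gelts R k n \<Longrightarrow>
    gdeg R (m * k) n i (gmul R m k n x y) = gmul R m k (Suc n) (gdeg R m n i x) (gdeg R k n i y)"
  using axioms by simp

lemma gmap_gmul: "pointed_map m m' f \<Longrightarrow> pointed_map k k' g \<Longrightarrow>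
    x \<in> gelts R m n \<Longrightarrow> y \<in> gelts R k n \<Longrightarrow>
    gmap R (m * k) (m' * k') (smash_map m k m' f g) n (gmul R m k n x y) =
    gmul R m' k' n (gmap R m m' f n x) (gmap R k k' g n y)"
  using axioms by simp

lemma one_closed: "gone R n \<in> gelts R 1 n"
  using axioms by simp

lemma face_one: "1 \<le> n \<Longrightarrow> i \<le> n \<Longrightarrow> gface R 1 n i (gone R n) = gone R (n - 1)"
  using axioms by simp

lemma deg_one: "i \<le> n \<Longrightarrow> gdeg R 1 n i (gone R n) = gone R (Suc n)"
  using axioms by simp

lemma gmul_one_left: "x \<in> gelts R m n \<Longrightarrow> gmul R 1 m n (gone R n) x = x"
  using axioms by simp

lemma gmul_one_right: "x \<in> gelts R m n \<Longrightarrow> gmul R m 1 n x (gone R n) = x"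
  using axioms by simp

lemma gmul_assoc: "x \<in> gelts R m n \<Longrightarrow> y \<in> gelts R k n \<Longrightarrow> z \<in> gelts R l n \<Longrightarrow>
    gmul R (m * k) l n (gmul R m k n x y) z = gmul R m (k * l) n x (gmul R k l n y z)"
  using axioms by simp

end


lemma pointed_comp: "pointed_map m k f \<Longrightarrow> pointed_map k l g \<Longrightarrow> pointed_map m l (g \<circ> f)"
  unfolding pointed_map_def by auto

lemma pointed_id: "pointed_map m m id"
  unfolding pointed_map_def by auto

lemma pointed_zero: "pointed_map m k (\<lambda>_. 0)"
  unfolding pointed_map_def by auto

lemma pointed_p: "1 \<le> i \<Longrightarrow> i \<le> N \<Longrightarrow> pointed_map N (N - 1) (p_map i)"
  unfolding pointed_map_def p_map_def by auto

lemma pointed_d: "1 \<le> l \<Longrightarrow> pointed_map (N - 1) N (d_map l)"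
  unfolding pointed_map_def d_map_def by auto

lemma pointed_s: "1 \<le> i \<Longrightarrow> i < j \<Longrightarrow> j \<le> N \<Longrightarrow> 1 \<le> l \<Longrightarrow> l \<le> N - 1 \<Longrightarrow>
    pointed_map N (N - 1) (s_map i j l)"
  unfolding pointed_map_def s_map_def Let_def by auto

lemma pointed_swap2: "pointed_map 2 2 swap2"
  unfolding pointed_map_def swap2_def by auto

text \<open>Arithmetic of the identification [m] /\ [k] = [mk], p = (j - 1) m + i.\<close>

lemma smash_index_decode:
  assumes "1 \<le> a" "a \<le> (M::nat)"
  shows "(c * M + a - 1) mod M + 1 = a" "(c * M + a - 1) div M = c"
proof -
  have e: "c * M + a - 1 = (a - 1) + c * M" using assms by auto
  have l: "a - 1 < M" using assms by auto
  have "((a - 1) + c * M) mod M = a - 1" using l by (simp add: mod_mult_self2)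
  then show "(c * M + a - 1) mod M + 1 = a" unfolding e using assms by simp
  have "((a - 1) + c * M) div M = c" using l by (simp add: div_mult_self2)
  then show "(c * M + a - 1) div M = c" unfolding e .
qed

lemma smash_index_bounds:
  assumes "1 \<le> p" "p \<le> m * k"
  shows "1 \<le> (p - 1) mod m + 1" "(p - 1) mod m + 1 \<le> m" "(p - 1) div m + 1 \<le> (k::nat)"
proof -
  have "p - 1 < k * m" using assms by (simp add: mult.commute)
  then have "(p - 1) div m < k" by (rule less_mult_imp_div_less)
  then show "(p - 1) div m + 1 \<le> k" by simp
  have "0 < m" using assms by (cases "m = 0") auto
  then show "1 \<le> (p - 1) mod m + 1" "(p - 1) mod m + 1 \<le> m" by (simp_all add: Suc_leI)
qed

lemma smash_index_encode:
  assumes "1 \<le> i" "i \<le> m" "1 \<le> j" "j \<le> (k::nat)"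
  shows "1 \<le> (j - 1) * m + i" "(j - 1) * m + i \<le> m * k"
proof -
  have "(j - 1) * m \<le> (k - 1) * m" using assms by simp
  then have "(j - 1) * m + i \<le> (k - 1) * m + m" using assms by linarith
  also have "\<dots> = k * m" using assms by (cases k) auto
  finally show "(j - 1) * m + i \<le> m * k" by (simp add: mult.commute)
qed (use assms in simp)

lemma pointed_smash:
  assumes f: "pointed_map m m' f" and g: "pointed_map k k' g"
  shows "pointed_map (m * k) (m' * k') (smash_map m k m' f g)"
  unfolding pointed_map_def
proof (intro conjI allI impI)
  show "smash_map m k m' f g 0 = 0" unfolding smash_map_def by simp
  fix p assume p: "p \<le> m * k"
  let ?i = "(p - 1) mod m + 1" and ?j = "(p - 1) div m + 1"
  show "smash_map m k m' f g p \<le> m' * k'"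
  proof (cases "p = 0 \<or> f ?i = 0 \<or> g ?j = 0")
    case False
    then have "?i \<le> m" "?j \<le> k" using p smash_index_bounds[of p m k] by auto
    then have "1 \<le> f ?i" "f ?i \<le> m'" "1 \<le> g ?j" "g ?j \<le> k'"
      using False f g unfolding pointed_map_def by auto
    then have "(g ?j - 1) * m' + f ?i \<le> m' * k'" by (rule smash_index_encode(2))
    then show ?thesis unfolding smash_map_def Let_def using False by auto
  qed (auto simp: smash_map_def Let_def)
qed

section \<open>The Gamma-ring HZ\<close>

lemma finite_fibre [simp]: "finite {i. 1 \<le> i \<and> i \<le> (m::nat) \<and> P i}"
  by (rule finite_subset[of _ "{..m}"]) auto

lemma hz_map_closed: "hz_map m k f v \<in> hz_elts k"
  unfolding hz_map_def hz_elts_def by auto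

lemma hz_mul_closed: "hz_mul m k v w \<in> hz_elts (m * k)"
  unfolding hz_mul_def hz_elts_def by auto

lemma hz_zero_closed: "(\<lambda>_. 0) \<in> hz_elts m"
  unfolding hz_elts_def by simp

lemma hz_one_closed: "hz_one \<in> hz_elts 1"
  unfolding hz_one_def hz_elts_def by simp

lemma hz_map_outside: "\<not> (1 \<le> j \<and> j \<le> k) \<Longrightarrow> hz_map m k f v j = 0"
  unfolding hz_map_def by auto

lemma hz_map_zero_map: "hz_map m k (\<lambda>_. 0) v = (\<lambda>_. 0)"
  unfolding hz_map_def by auto

lemma hz_map_id: "v \<in> hz_elts m \<Longrightarrow> hz_map m m id v = v"
proof (rule ext)
  fix j assume v: "v \<in> hz_elts m"
  show "hz_map m m id v j = v j"
  proof (cases "1 \<le> j \<and> j \<le> m")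
    case True
    then have "{i. 1 \<le> i \<and> i \<le> m \<and> id i = j} = {j}" by auto
    then show ?thesis using True unfolding hz_map_def by simp
  next
    case False then show ?thesis using v unfolding hz_map_def hz_elts_def by (cases "j = 0") auto
  qed
qed

text \<open>Functoriality: summing along the fibres of f and then of g is summing along those of g o f.\<close>

lemma hz_map_comp:
  assumes f: "pointed_map m k f" and g: "pointed_map k l g"
  shows "hz_map k l g (hz_map m k f v) = hz_map m l (g \<circ> f) v"
proof (rule ext)
  fix j
  show "hz_map k l g (hz_map m k f v) j = hz_map m l (g \<circ> f) v j"
  proof (cases "1 \<le> j \<and> j \<le> l")
    case False then show ?thesis unfolding hz_map_def by presburger
  next
    case True
    let ?S = "{i. 1 \<le> i \<and> i \<le> m \<and> (g \<circ> f) i = j}"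
    let ?T = "{y. 1 \<le> y \<and> y \<le> k \<and> g y = j}"
    have "f i \<in> ?T" if "i \<in> ?S" for i
    proof -
      have "g (f i) = j" using that by simp
      then have "f i \<noteq> 0" using True g unfolding pointed_map_def by (cases "f i") auto
      then show ?thesis using that f unfolding pointed_map_def by auto
    qed
    then have img: "f ` ?S \<subseteq> ?T" by blast
    have "hz_map k l g (hz_map m k f v) j = (\<Sum>y\<in>?T. hz_map m k f v y)"
      using True unfolding hz_map_def by simp
    also have "\<dots> = (\<Sum>y\<in>?T. sum v {x. x \<in> ?S \<and> f x = y})"
      unfolding hz_map_def by (intro sum.cong) (auto intro!: sum.cong)
    also have "\<dots> = sum v ?S"
      by (rule sum.group) (use img in auto)
    also have "\<dots> = hz_map m l (g \<circ> f) v j" using True unfolding hz_map_def by simp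
    finally show ?thesis .
  qed
qed

lemma smash_fibre_bij:
  assumes f: "pointed_map m m' f" and g: "pointed_map k k' g" and p: "1 \<le> p" "p \<le> m' * k'"
  defines "ip \<equiv> (p - 1) mod m' + 1" and "jp \<equiv> (p - 1) div m' + 1"
  shows "bij_betw (\<lambda>(i, j). (j - 1) * m + i)
    ({i. 1 \<le> i \<and> i \<le> m \<and> f i = ip} \<times> {j. 1 \<le> j \<and> j \<le> k \<and> g j = jp})
    {q. 1 \<le> q \<and> q \<le> m * k \<and> smash_map m k m' f g q = p}"
proof (rule bij_betw_byWitness[where f' = "\<lambda>q. ((q - 1) mod m + 1, (q - 1) div m + 1)"])
  have ipr: "1 \<le> ip" "ip \<le> m'" and jpr: "1 \<le> jp" "jp \<le> k'"
    using smash_index_bounds[OF p] unfolding ip_def jp_def by auto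
  have pdec: "p = (jp - 1) * m' + ip" unfolding ip_def jp_def using p by simp
  show "\<forall>ij\<in>{i. 1 \<le> i \<and> i \<le> m \<and> f i = ip} \<times> {j. 1 \<le> j \<and> j \<le> k \<and> g j = jp}.
      (\<lambda>q. ((q - 1) mod m + 1, (q - 1) div m + 1)) ((\<lambda>(i, j). (j - 1) * m + i) ij) = ij"
    using smash_index_decode by auto
  have "(j - 1) * m + i \<in> {q. 1 \<le> q \<and> q \<le> m * k \<and> smash_map m k m' f g q = p}"
    if i: "1 \<le> i" "i \<le> m" "f i = ip" and j: "1 \<le> j" "j \<le> k" "g j = jp" for i j
  proof -
    note r = smash_index_encode[OF i(1,2) j(1,2)]
    note d = smash_index_decode[OF i(1,2), of "j - 1"]
    show ?thesis using r d i j ipr jpr pdec unfolding smash_map_def Let_def by auto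
  qed
  then show "(\<lambda>(i, j). (j - 1) * m + i) ` ({i. 1 \<le> i \<and> i \<le> m \<and> f i = ip} \<times> {j. 1 \<le> j \<and> j \<le> k \<and> g j = jp})
      \<subseteq> {q. 1 \<le> q \<and> q \<le> m * k \<and> smash_map m k m' f g q = p}"
    by auto
  show "\<forall>q\<in>{q. 1 \<le> q \<and> q \<le> m * k \<and> smash_map m k m' f g q = p}.
      (\<lambda>(i, j). (j - 1) * m + i) ((\<lambda>q. ((q - 1) mod m + 1, (q - 1) div m + 1)) q) = q"
    by auto
  show "(\<lambda>q. ((q - 1) mod m + 1, (q - 1) div m + 1)) ` {q. 1 \<le> q \<and> q \<le> m * k \<and> smash_map m k m' f g q = p}
      \<subseteq> {i. 1 \<le> i \<and> i \<le> m \<and> f i = ip} \<times> {j. 1 \<le> j \<and> j \<le> k \<and> g j = jp}"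
  proof (rule image_subsetI)
    fix q assume "q \<in> {q. 1 \<le> q \<and> q \<le> m * k \<and> smash_map m k m' f g q = p}"
    then have q: "1 \<le> q" "q \<le> m * k" "smash_map m k m' f g q = p" by auto
    let ?i = "(q - 1) mod m + 1" and ?j = "(q - 1) div m + 1"
    note b = smash_index_bounds[OF q(1,2)]
    have nz: "f ?i \<noteq> 0" "g ?j \<noteq> 0" and eq: "(g ?j - 1) * m' + f ?i = p"
      using q p unfolding smash_map_def Let_def by (auto split: if_splits)
    have "1 \<le> f ?i" "f ?i \<le> m'" using nz f b unfolding pointed_map_def by auto
    note d = smash_index_decode[OF this, of "g ?j - 1"]
    have "f ?i = ip" "g ?j = jp" using d eq nz unfolding ip_def jp_def by auto
    then show "(?i, ?j) \<in> {i. 1 \<le> i \<and> i \<le> m \<and> f i = ip} \<times> {j. 1 \<le> j \<and> j \<le> k \<and> g j = jp}"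
      using b by auto
  qed
qed

lemma hz_map_hz_mul:
  assumes f: "pointed_map m m' f" and g: "pointed_map k k' g"
  shows "hz_map (m * k) (m' * k') (smash_map m k m' f g) (hz_mul m k v w) =
         hz_mul m' k' (hz_map m m' f v) (hz_map k k' g w)"
proof (rule ext)
  fix p
  show "hz_map (m * k) (m' * k') (smash_map m k m' f g) (hz_mul m k v w) p =
        hz_mul m' k' (hz_map m m' f v) (hz_map k k' g w) p"
  proof (cases "1 \<le> p \<and> p \<le> m' * k'")
    case False then show ?thesis unfolding hz_map_def hz_mul_def by auto
  next
    case True
    define ip where "ip = (p - 1) mod m' + 1"
    define jp where "jp = (p - 1) div m' + 1"
    let ?A = "{i. 1 \<le> i \<and> i \<le> m \<and> f i = ip}" and ?B = "{j. 1 \<le> j \<and> j \<le> k \<and> g j = jp}"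
    let ?Q = "{q. 1 \<le> q \<and> q \<le> m * k \<and> smash_map m k m' f g q = p}"
    define G where "G q = v ((q - 1) mod m + 1) * w ((q - 1) div m + 1)" for q
    have bij: "bij_betw (\<lambda>(i, j). (j - 1) * m + i) (?A \<times> ?B) ?Q"
      using smash_fibre_bij[OF f g] True unfolding ip_def jp_def by blast
    have "hz_mul m' k' (hz_map m m' f v) (hz_map k k' g w) p = sum v ?A * sum w ?B"
      using True smash_index_bounds[of p m' k'] unfolding hz_mul_def hz_map_def ip_def jp_def by simp
    also have "\<dots> = (\<Sum>(i, j)\<in>?A \<times> ?B. v i * w j)"
      by (simp add: sum_product sum.cartesian_product)
    also have "\<dots> = (\<Sum>x\<in>?A \<times> ?B. G (case x of (i, j) \<Rightarrow> (j - 1) * m + i))"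
    proof (rule sum.cong[OF refl])
      fix x assume "x \<in> ?A \<times> ?B"
      then obtain i j where x: "x = (i, j)" "1 \<le> i" "i \<le> m" "1 \<le> j" by auto
      show "(case x of (i, j) \<Rightarrow> v i * w j) = G (case x of (i, j) \<Rightarrow> (j - 1) * m + i)"
        using smash_index_decode[of i m "j - 1"] x unfolding G_def by simp
    qed
    also have "\<dots> = sum G ?Q"
      by (rule sum.reindex_bij_betw[OF bij])
    also have "\<dots> = hz_map (m * k) (m' * k') (smash_map m k m' f g) (hz_mul m k v w) p"
      using True unfolding hz_map_def hz_mul_def G_def by (auto intro!: sum.cong)
    finally show ?thesis by simp
  qed
qed

lemma hz_map_update:
  assumes ft: "f t = 0" and t: "1 \<le> t" "t \<le> m" and q: "1 \<le> q" "q \<le> k"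
  shows "hz_map m k (f(t := q)) v = (hz_map m k f v)(q := hz_map m k f v q + v t)"
proof (rule ext)
  fix j
  show "hz_map m k (f(t := q)) v j = ((hz_map m k f v)(q := hz_map m k f v q + v t)) j"
  proof (cases "1 \<le> j \<and> j \<le> k")
    case False
    then show ?thesis using hz_map_outside[OF False] q by auto
  next
    case True
    let ?S = "{i. 1 \<le> i \<and> i \<le> m \<and> f i = j}"
    have fib: "{i. 1 \<le> i \<and> i \<le> m \<and> (f(t := q)) i = j} = (if j = q then insert t ?S else ?S)"
      using ft t True by auto
    have "t \<notin> ?S" using ft True by auto
    then show ?thesis using True unfolding hz_map_def fib by (cases "j = q") (simp_all add: add.commute)
  qed
qed

lemma hz_map_cancel_pair:
  assumes f: "f i = 0" "f j = 0" and ij: "i \<noteq> j" "1 \<le> i" "i \<le> m" "1 \<le> j" "j \<le> m"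
    and c: "1 \<le> c" "c \<le> k" and v: "v i + v j = 0"
  shows "hz_map m k (f(i := c, j := c)) v = hz_map m k f v"
proof -
  have "hz_map m k (f(i := c, j := c)) v = (hz_map m k (f(i := c)) v)(c := hz_map m k (f(i := c)) v c + v j)"
    using hz_map_update[of "f(i := c)" j m c k v] f ij c by simp
  also have "\<dots> = hz_map m k f v"
    using hz_map_update[of f i m c k v] f ij c v by (simp add: fun_eq_iff)
  finally show ?thesis .
qed

section \<open>Sign vectors\<close>

text \<open>The sign vector sigma_k in HZ[2^k]: +1 on A_+ and -1 on A_-.  Multiplicative maps
  send sigma_k to r^k, where r is the image of sigma_1 = e_1 - e_2.\<close>

definition sign_vec :: "nat \<Rightarrow> nat \<Rightarrow> int" where
  "sign_vec k = (\<lambda>p. if 1 \<le> p \<and> p \<le> 2 ^ k then (if in_Aplus p then 1 else -1) else 0)"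

declare bitcount.simps [simp del]

lemma bitcount_0: "bitcount 0 = 0"
  by (subst bitcount.simps) simp

lemma bitcount_step: "bitcount x = x mod 2 + bitcount (x div 2)"
  by (cases "x = 0") (simp_all add: bitcount_0, subst bitcount.simps, simp)

lemma bitcount_digit: "b < 2 \<Longrightarrow> bitcount (b + 2 * y) = b + bitcount y"
  by (subst bitcount_step) auto

lemma bitcount_split: "bitcount x = bitcount (x mod 2 ^ a) + bitcount (x div 2 ^ a)"
proof (induction a arbitrary: x)
  case 0 then show ?case by (simp add: bitcount_0)
next
  case (Suc a)
  have m: "x mod 2 ^ Suc a = x mod 2 + 2 * ((x div 2) mod 2 ^ a)"
    by (simp add: mod_mult2_eq mult.commute)
  have d: "x div 2 ^ Suc a = (x div 2) div 2 ^ a"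
    by (simp add: div_mult2_eq)
  have "bitcount x = x mod 2 + bitcount (x div 2)" by (rule bitcount_step)
  also have "\<dots> = x mod 2 + bitcount ((x div 2) mod 2 ^ a) + bitcount ((x div 2) div 2 ^ a)"
    using Suc[of "x div 2"] by simp
  also have "\<dots> = bitcount (x mod 2 ^ Suc a) + bitcount (x div 2 ^ Suc a)"
    unfolding m d by (subst bitcount_digit) auto
  finally show ?case .
qed

lemma bitcount_pow2_minus1: "bitcount (2 ^ j - 1) = j"
proof (induction j)
  case 0 then show ?case by (simp add: bitcount_0)
next
  case (Suc j)
  have "(2::nat) ^ Suc j - 1 = 1 + 2 * (2 ^ j - 1)"
  proof -
    have "(1::nat) \<le> 2 ^ j" by simp
    then show ?thesis by (simp only: power_Suc)
  qed
  then show ?case using Suc bitcount_digit[of 1 "2 ^ j - 1"] by simp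
qed

lemma bitcount_pow2_minus2: "bitcount (2 ^ Suc j - 2) = j"
proof -
  have "(2::nat) ^ Suc j - 2 = 0 + 2 * (2 ^ j - 1)" by (simp add: right_diff_distrib')
  then show ?thesis using bitcount_pow2_minus1[of j] bitcount_digit[of 0 "2 ^ j - 1"] by simp
qed

lemma sign_vec_closed: "sign_vec k \<in> hz_elts (2 ^ k)"
  unfolding sign_vec_def hz_elts_def by auto

lemma sign_vec_val: "1 \<le> p \<Longrightarrow> p \<le> 2 ^ k \<Longrightarrow> sign_vec k p = (if in_Aplus p then 1 else -1)"
  unfolding sign_vec_def by auto

lemma sign_vec_eq_iff: "1 \<le> a \<Longrightarrow> a \<le> 2 ^ k \<Longrightarrow> 1 \<le> b \<Longrightarrow> b \<le> 2 ^ k \<Longrightarrow>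
    (sign_vec k a = sign_vec k b) = (in_Aplus a = in_Aplus b)"
  unfolding sign_vec_def by auto

lemma sign_vec_0: "sign_vec 0 = hz_one"
  unfolding sign_vec_def hz_one_def in_Aplus_def by (auto simp: bitcount_0)

lemma sign_vec_1: "sign_vec 1 = (\<lambda>p. if p = 1 then 1 else if p = 2 then -1 else 0)"
proof (rule ext)
  fix p :: nat
  have "bitcount 1 = 1" using bitcount_step[of 1] bitcount_0 by simp
  then show "sign_vec 1 p = (if p = 1 then 1 else if p = 2 then -1 else 0)"
    unfolding sign_vec_def in_Aplus_def using bitcount_0 by auto
qed

text \<open>sigma_a sigma_b = sigma_(a+b): the parity of the binary digits is additive
  under the identification [2^a] /\ [2^b] = [2^(a+b)].\<close>

lemma sign_vec_mul: "hz_mul (2 ^ a) (2 ^ b) (sign_vec a) (sign_vec b) = sign_vec (a + b)"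
proof (rule ext)
  fix p :: nat
  show "hz_mul (2 ^ a) (2 ^ b) (sign_vec a) (sign_vec b) p = sign_vec (a + b) p"
  proof (cases "1 \<le> p \<and> p \<le> 2 ^ a * 2 ^ b")
    case False then show ?thesis unfolding hz_mul_def sign_vec_def by (auto simp: power_add)
  next
    case True
    let ?x = "p - 1"
    note b = smash_index_bounds[of p "2 ^ a" "2 ^ b"]
    have bc: "bitcount ?x = bitcount (?x mod 2 ^ a) + bitcount (?x div 2 ^ a)" by (rule bitcount_split)
    show ?thesis using True b bc unfolding hz_mul_def sign_vec_def in_Aplus_def
      by (auto simp: power_add)
  qed
qed

lemma hz_map_special_perm:
  assumes bij: "bij_betw \<pi> {1..2 ^ k} {1..2 ^ k}"
    and sg: "\<forall>i\<in>{1..2 ^ k}. in_Aplus (\<pi> i) = in_Aplus i"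
  shows "hz_map (2 ^ k) (2 ^ k) \<pi> (sign_vec k) = sign_vec k"
proof (rule ext)
  fix j
  show "hz_map (2 ^ k) (2 ^ k) \<pi> (sign_vec k) j = sign_vec k j"
  proof (cases "1 \<le> j \<and> j \<le> 2 ^ k")
    case False then show ?thesis unfolding hz_map_def sign_vec_def by auto
  next
    case True
    then obtain i0 where i0: "i0 \<in> {1..2 ^ k}" "\<pi> i0 = j"
      using bij unfolding bij_betw_def by (metis atLeastAtMost_iff imageE)
    have "{i. 1 \<le> i \<and> i \<le> 2 ^ k \<and> \<pi> i = j} = {i0}"
      using i0 bij unfolding bij_betw_def inj_on_def by auto
    then show ?thesis using True i0 sg unfolding hz_map_def sign_vec_def by auto
  qed
qed

text \<open>Truncation [2^K] -> [2^a] (a <= K), collapsing the points above 2^a; it carries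
  sigma_K to sigma_a.  On the ring side it corresponds to discarding factors r of r^K.\<close>

definition trunc_map :: "nat \<Rightarrow> nat \<Rightarrow> nat" where
  "trunc_map a = (\<lambda>p. if p \<le> 2 ^ a then p else 0)"

lemma pointed_trunc_map: "pointed_map (2 ^ K) (2 ^ a) (trunc_map a)"
  unfolding pointed_map_def trunc_map_def by auto

lemma trunc_map_absorb: "a \<le> K \<Longrightarrow> trunc_map a (trunc_map K p) = trunc_map a p"
  unfolding trunc_map_def by (auto dest: le_trans[OF _ power_increasing[of a K "2::nat"]])

lemma hz_map_trunc_map:
  assumes "a \<le> K"
  shows "hz_map (2 ^ K) (2 ^ a) (trunc_map a) (sign_vec K) = sign_vec a"
proof (rule ext)
  fix j
  have pw: "(2::nat) ^ a \<le> 2 ^ K" using assms by simp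
  show "hz_map (2 ^ K) (2 ^ a) (trunc_map a) (sign_vec K) j = sign_vec a j"
  proof (cases "1 \<le> j \<and> j \<le> 2 ^ a")
    case False then show ?thesis unfolding hz_map_def sign_vec_def by auto
  next
    case True
    have jK: "j \<le> 2 ^ K" using True pw by linarith
    have "{i. 1 \<le> i \<and> i \<le> 2 ^ K \<and> trunc_map a i = j} = {j}"
      using True jK unfolding trunc_map_def by auto
    then show ?thesis using True jK unfolding hz_map_def sign_vec_def by auto
  qed
qed

lemma hz_map_raise:
  assumes "a \<le> K" and f: "pointed_map (2 ^ a) M f"
  shows "hz_map (2 ^ K) M (f \<circ> trunc_map a) (sign_vec K) = hz_map (2 ^ a) M f (sign_vec a)"
  using hz_map_comp[OF pointed_trunc_map[of K a] f, of "sign_vec K"] hz_map_trunc_map[OF assms(1)] by simp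

subsection \<open>Every element of HZ[m] is a push-forward of a sign vector\<close>

text \<open>Adding +1 or -1 at a point q to a push-forward of sigma_k gives a push-forward of
  sigma_(k+2): the last two points of [2^(k+2)] lie above the truncation and carry
  opposite signs, so one of them can be sent to q.\<close>

lemma presentation_add_unit:
  assumes f: "pointed_map (2 ^ k) m f" and q: "1 \<le> q" "q \<le> m" and s: "s = 1 \<or> s = (-1::int)"
  obtains K g where "pointed_map (2 ^ K) m g"
    "hz_map (2 ^ K) m g (sign_vec K) = (hz_map (2 ^ k) m f (sign_vec k))(q := hz_map (2 ^ k) m f (sign_vec k) q + s)"
proof -
  define K where "K = k + 2"
  define f1 where "f1 = f \<circ> trunc_map k"
  have pm1: "pointed_map (2 ^ K) m f1" unfolding f1_def by (rule pointed_comp[OF pointed_trunc_map f])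
  have v1: "hz_map (2 ^ K) m f1 (sign_vec K) = hz_map (2 ^ k) m f (sign_vec k)"
    unfolding f1_def K_def by (rule hz_map_raise[OF _ f]) simp
  define t :: nat where "t = (if (s = 1) = even K then 2 ^ K else 2 ^ K - 1)"
  have big: "(2::nat) ^ k < 2 ^ K - 1"
  proof -
    have "(1::nat) \<le> 2 ^ k" by simp
    moreover have "(2::nat) ^ K = 4 * 2 ^ k" unfolding K_def by simp
    ultimately show ?thesis by linarith
  qed
  have t: "1 \<le> t" "t \<le> 2 ^ K" "2 ^ k < t" unfolding t_def using big by (auto simp: K_def)
  have st: "sign_vec K t = s"
  proof -
    have a1: "in_Aplus (2 ^ K) = even K" unfolding in_Aplus_def using bitcount_pow2_minus1 by simp
    have e: "(2::nat) ^ K - 1 - 1 = 2 ^ Suc (k + 1) - 2" unfolding K_def by simp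
    have a2: "in_Aplus (2 ^ K - 1) = even (k + 1)" unfolding in_Aplus_def e bitcount_pow2_minus2 ..
    show ?thesis using t a1 a2 s unfolding sign_vec_def t_def K_def by auto
  qed
  have f1t: "f1 t = 0" unfolding f1_def trunc_map_def using t f unfolding pointed_map_def by auto
  have "pointed_map (2 ^ K) m (f1(t := q))" using pm1 q t unfolding pointed_map_def by auto
  moreover have "hz_map (2 ^ K) m (f1(t := q)) (sign_vec K) =
      (hz_map (2 ^ k) m f (sign_vec k))(q := hz_map (2 ^ k) m f (sign_vec k) q + s)"
    using hz_map_update[of f1 t "2 ^ K" q m "sign_vec K"] f1t t q v1 st by simp
  ultimately show ?thesis by (rule that)
qed

text \<open>Induction on the l1-norm of v, starting from v = 0 = (constant 0)_*(sigma_0).\<close>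

lemma sign_vec_presentation:
  assumes "v \<in> hz_elts m"
  shows "\<exists>k f. pointed_map (2 ^ k) m f \<and> hz_map (2 ^ k) m f (sign_vec k) = v"
proof -
  define N where "N v = (\<Sum>q\<in>{1..m}. nat \<bar>v q\<bar>)" for v :: "nat \<Rightarrow> int"
  have "v \<in> hz_elts m \<Longrightarrow> N v = n \<Longrightarrow> \<exists>k f. pointed_map (2 ^ k) m f \<and> hz_map (2 ^ k) m f (sign_vec k) = v"
    for n
  proof (induction n arbitrary: v)
    case 0
    then have z: "\<forall>a\<in>{1..m}. v a = 0" unfolding N_def by auto
    have "v = (\<lambda>_. 0)"
    proof (rule ext)
      fix x show "v x = 0" using z 0(1) unfolding hz_elts_def by (cases "x = 0"; cases "x \<le> m") auto
    qed
    then show ?case using hz_map_zero_map pointed_zero by metis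
  next
    case (Suc n)
    have "\<exists>q\<in>{1..m}. v q \<noteq> 0"
    proof (rule ccontr)
      assume "\<not> (\<exists>q\<in>{1..m}. v q \<noteq> 0)"
      then have "N v = 0" unfolding N_def by auto
      then show False using Suc.prems(2) by simp
    qed
    then obtain q where q: "q \<in> {1..m}" "v q \<noteq> 0" by blast
    define s :: int where "s = (if v q > 0 then 1 else -1)"
    define v' where "v' = v(q := v q - s)"
    have "N v = nat \<bar>v q\<bar> + (\<Sum>x\<in>{1..m}-{q}. nat \<bar>v x\<bar>)" "N v' = nat \<bar>v' q\<bar> + (\<Sum>x\<in>{1..m}-{q}. nat \<bar>v' x\<bar>)"
      unfolding N_def using q(1) by (simp_all add: sum.remove)
    moreover have "(\<Sum>x\<in>{1..m}-{q}. nat \<bar>v' x\<bar>) = (\<Sum>x\<in>{1..m}-{q}. nat \<bar>v x\<bar>)"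
      unfolding v'_def by (rule sum.cong) auto
    moreover have "nat \<bar>v' q\<bar> + 1 = nat \<bar>v q\<bar>" using q unfolding v'_def s_def by auto
    ultimately have "N v' = n" using Suc.prems(2) by simp
    moreover have "v' \<in> hz_elts m" using Suc.prems(1) q unfolding v'_def hz_elts_def by auto
    ultimately obtain k f where f: "pointed_map (2 ^ k) m f" "hz_map (2 ^ k) m f (sign_vec k) = v'"
      using Suc.IH by blast
    have qb: "1 \<le> q" "q \<le> m" and s: "s = 1 \<or> s = -1" using q(1) unfolding s_def by auto
    obtain K g where "pointed_map (2 ^ K) m g" "hz_map (2 ^ K) m g (sign_vec K) = v'(q := v' q + s)"
      using presentation_add_unit[OF f(1) qb s] unfolding f(2) by blast
    moreover have "v'(q := v' q + s) = v" unfolding v'_def by auto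
    ultimately show ?case by metis
  qed
  then show ?thesis using assms by blast
qed

section \<open>Powers of an element of R[2]\<close>

lemma smash_trunc_map: "p \<le> 2 ^ k * 2 \<Longrightarrow> smash_map (2 ^ k) 2 (2 ^ k) id (p_map 2) p = trunc_map k p"
proof (cases "p = 0")
  case True then show ?thesis unfolding smash_map_def trunc_map_def by simp
next
  case False
  assume p: "p \<le> 2 ^ k * 2"
  show ?thesis
  proof (cases "p \<le> 2 ^ k")
    case True
    then have "(p - 1) div 2 ^ k = 0" "(p - 1) mod 2 ^ k = p - 1" using False by auto
    then show ?thesis using True False p unfolding smash_map_def trunc_map_def Let_def p_map_def by simp
  next
    case above: False
    define q where "q = p - 1 - 2 ^ k"
    have q: "q < 2 ^ k" "p - 1 = q + 2 ^ k" using p above unfolding q_def by auto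
    have "(q + 2 ^ k) div 2 ^ k = q div 2 ^ k + 1" by (rule div_add_self2) simp
    then have "(p - 1) div 2 ^ k = 1" using q by simp
    then show ?thesis using above False p unfolding smash_map_def trunc_map_def Let_def p_map_def by simp
  qed
qed

context gamma_ring
begin

text \<open>Every push-forward along the zero map factors through R[0] = *.\<close>

lemma gmap_zero_map: "x \<in> gelts R m n \<Longrightarrow> gmap R m k (\<lambda>_. 0) n x = gbase R k n"
proof -
  assume x: "x \<in> gelts R m n"
  have "gmap R m 0 (\<lambda>_. 0) n x = gbase R 0 n"
    using gmap_closed[OF pointed_zero x] level0_point by auto
  moreover have "gmap R 0 k (\<lambda>_. 0) n (gmap R m 0 (\<lambda>_. 0) n x) = gmap R m k (\<lambda>_. 0) n x"
    using gmap_comp[OF pointed_zero pointed_zero x] by (simp add: o_def)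
  ultimately show ?thesis using gmap_base[OF pointed_zero] by simp
qed

lemma rpow_closed:
  assumes r: "r \<in> gelts R 2 n"
  shows "rpow R n r k \<in> gelts R (2 ^ k) n"
proof (induction k)
  case 0 then show ?case using one_closed by simp
next
  case (Suc k) then show ?case using gmul_closed[OF Suc r] by (simp add: mult.commute)
qed

lemma rpow_add:
  assumes r: "r \<in> gelts R 2 n"
  shows "gmul R (2 ^ a) (2 ^ b) n (rpow R n r a) (rpow R n r b) = rpow R n r (a + b)"
proof (induction b)
  case 0 then show ?case using gmul_one_right[OF rpow_closed[OF r]] by simp
next
  case (Suc b)
  have "rpow R n r (a + Suc b) =
      gmul R (2 ^ a * 2 ^ b) 2 n (gmul R (2 ^ a) (2 ^ b) n (rpow R n r a) (rpow R n r b)) r"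
    by (simp add: Suc.IH power_add)
  also have "\<dots> = gmul R (2 ^ a) (2 ^ b * 2) n (rpow R n r a) (gmul R (2 ^ b) 2 n (rpow R n r b) r)"
    by (rule gmul_assoc[OF rpow_closed[OF r] rpow_closed[OF r] r])
  finally show ?case by (simp add: mult.commute)
qed

text \<open>If p_2(r) = 1, discarding the last factor of r^(k+1) gives r^k; hence a push-forward
  of r^a is also a push-forward of r^K for every K >= a.\<close>

lemma rpow_truncate:
  assumes r: "r \<in> gelts R 2 n" and r2: "gmap R 2 1 (p_map 2) n r = gone R n"
  shows "gmap R (2 ^ Suc k) (2 ^ k) (trunc_map k) n (rpow R n r (Suc k)) = rpow R n r k"
proof -
  note rk = rpow_closed[OF r, of k]
  have p2: "pointed_map 2 1 (p_map 2)" using pointed_p[of 2 2] by simp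
  have rk1: "rpow R n r (Suc k) \<in> gelts R (2 ^ k * 2) n" using rpow_closed[OF r, of "Suc k"] by (simp add: mult.commute)
  have "gmap R (2 ^ k * 2) (2 ^ k * 1) (trunc_map k) n (rpow R n r (Suc k)) =
      gmap R (2 ^ k * 2) (2 ^ k * 1) (smash_map (2 ^ k) 2 (2 ^ k) id (p_map 2)) n (rpow R n r (Suc k))"
    by (rule gmap_cong[OF _ rk1]) (simp add: smash_trunc_map)
  also have "\<dots> = gmap R (2 ^ k * 2) (2 ^ k * 1) (smash_map (2 ^ k) 2 (2 ^ k) id (p_map 2)) n
      (gmul R (2 ^ k) 2 n (rpow R n r k) r)"
    by simp
  also have "\<dots> = gmul R (2 ^ k) 1 n (gmap R (2 ^ k) (2 ^ k) id n (rpow R n r k)) (gmap R 2 1 (p_map 2) n r)"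
    by (rule gmap_gmul[OF pointed_id p2 rk r])
  also have "\<dots> = rpow R n r k" using gmap_id[OF rk] r2 gmul_one_right[OF rk] by simp
  finally show ?thesis by (simp add: mult.commute)
qed

lemma gmap_rpow_raise:
  assumes r: "r \<in> gelts R 2 n" and r2: "gmap R 2 1 (p_map 2) n r = gone R n"
    and aK: "a \<le> K" and f: "pointed_map (2 ^ a) M f"
  shows "gmap R (2 ^ a) M f n (rpow R n r a) = gmap R (2 ^ K) M (f \<circ> trunc_map a) n (rpow R n r K)"
  using aK
proof (induction K rule: dec_induct)
  case base
  show ?case by (rule gmap_cong[OF _ rpow_closed[OF r]]) (simp add: trunc_map_def)
next
  case (step K)
  have pm: "pointed_map (2 ^ K) M (f \<circ> trunc_map a)" by (rule pointed_comp[OF pointed_trunc_map f])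
  have "gmap R (2 ^ K) M (f \<circ> trunc_map a) n (rpow R n r K) =
      gmap R (2 ^ K) M (f \<circ> trunc_map a) n (gmap R (2 ^ Suc K) (2 ^ K) (trunc_map K) n (rpow R n r (Suc K)))"
    using rpow_truncate[OF r r2] by simp
  also have "\<dots> = gmap R (2 ^ Suc K) M (f \<circ> trunc_map a \<circ> trunc_map K) n (rpow R n r (Suc K))"
    by (rule gmap_comp[OF pointed_trunc_map pm rpow_closed[OF r]])
  also have "\<dots> = gmap R (2 ^ Suc K) M (f \<circ> trunc_map a) n (rpow R n r (Suc K))"
    by (rule gmap_cong[OF _ rpow_closed[OF r]]) (simp add: trunc_map_absorb step.hyps)
  finally have "gmap R (2 ^ K) M (f \<circ> trunc_map a) n (rpow R n r K) =
      gmap R (2 ^ Suc K) M (f \<circ> trunc_map a) n (rpow R n r (Suc K))" .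
  with step.IH show ?case by (rule trans)
qed

end

section \<open>Combinatorics of presentations\<close>

text \<open>A section of s_(i,j,1) : [N] -> [N-1]: it sends 1 to i and the remaining points
  order-preservingly to [N] minus {0, i, j}.\<close>

definition merge_section :: "nat \<Rightarrow> nat \<Rightarrow> nat \<Rightarrow> nat" where
  "merge_section i j u = (if u = 0 then 0 else if u = 1 then i else
     (if u - 1 < i then u - 1 else if u < j then u else u + 1))"

lemma merge_section_s_map: "1 \<le> i \<Longrightarrow> i < j \<Longrightarrow> t \<noteq> i \<Longrightarrow> t \<noteq> j \<Longrightarrow> merge_section i j (s_map i j 1 t) = t"
  unfolding merge_section_def s_map_def Let_def by auto

lemma merge_section_bound: "1 \<le> i \<Longrightarrow> i < j \<Longrightarrow> j \<le> N \<Longrightarrow> u \<le> N - 1 \<Longrightarrow> merge_section i j u \<le> N"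
  unfolding merge_section_def by auto

lemma s_map_factorisation:
  assumes "1 \<le> i" "i < j" "1 \<le> l"
  shows "s_map i j l = (d_map l \<circ> p_map i \<circ> p_map j)(i := l, j := l)"
    and "(d_map l \<circ> p_map i \<circ> p_map j) i = 0" "(d_map l \<circ> p_map i \<circ> p_map j) j = 0"
proof -
  have "s_map i j l t = d_map l (p_map i (p_map j t))" if "t \<noteq> i" "t \<noteq> j" for t
    using assms that unfolding s_map_def d_map_def p_map_def Let_def by auto
  moreover have "s_map i j l i = l" "s_map i j l j = l"
    using assms unfolding s_map_def by auto
  ultimately show "s_map i j l = (d_map l \<circ> p_map i \<circ> p_map j)(i := l, j := l)"
    by (intro ext) simp
  show "(d_map l \<circ> p_map i \<circ> p_map j) i = 0" "(d_map l \<circ> p_map i \<circ> p_map j) j = 0"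
    using assms unfolding d_map_def p_map_def by auto
qed

text \<open>Consequently a pointed map f with f(0) = 0 and f(i) = f(j) factors through s_(i,j,1)
  via f o merge_section, and f with i, j sent to 0 factors through d_1 p_i p_j the same way.\<close>

lemma merge_section_factorisation:
  assumes ij: "1 \<le> i" "i < j" and f0: "f 0 = 0" and fij: "f i = f j"
  shows "f t = f (merge_section i j (s_map i j 1 t))"
    and "(f(i := 0, j := 0)) t = f (merge_section i j (d_map 1 (p_map i (p_map j t))))"
proof -
  note fact = s_map_factorisation[OF ij, of 1]
  show "f t = f (merge_section i j (s_map i j 1 t))"
    using ij fij merge_section_s_map[OF ij, of t] fact(1) unfolding merge_section_def
    by (cases "t = i \<or> t = j") auto
  show "(f(i := 0, j := 0)) t = f (merge_section i j (d_map 1 (p_map i (p_map j t))))"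
  proof (cases "t = i \<or> t = j")
    case True then show ?thesis using fact(2,3) f0 unfolding merge_section_def by auto
  next
    case False
    then have "d_map 1 (p_map i (p_map j t)) = s_map i j 1 t" using fact(1) by simp
    then show ?thesis using False merge_section_s_map[OF ij] by simp
  qed
qed

lemma pointed_map_remove_pair: "pointed_map m k f \<Longrightarrow> pointed_map m k (f(i := 0, j := 0))"
  unfolding pointed_map_def by auto

text \<open>Every pointed map can be made sign-separating by
  collapsing +/- pairs, and two sign-separating maps with the same push-forward of
  sigma_k differ by a permutation preserving A_+ and A_-.\<close>

definition sign_separating :: "nat \<Rightarrow> (nat \<Rightarrow> nat) \<Rightarrow> bool" where
  "sign_separating k f \<longleftrightarrow> (\<forall>a b. 1 \<le> a \<longrightarrow> a \<le> 2 ^ k \<longrightarrow> 1 \<le> b \<longrightarrow> b \<le> 2 ^ k \<longrightarrow>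
      f a = f b \<longrightarrow> f a \<noteq> 0 \<longrightarrow> in_Aplus a = in_Aplus b)"

definition disagreement :: "nat \<Rightarrow> (nat \<Rightarrow> nat) \<Rightarrow> (nat \<Rightarrow> nat) \<Rightarrow> nat set" where
  "disagreement k f g = {t. 1 \<le> t \<and> t \<le> 2 ^ k \<and> f t \<noteq> g t}"

lemma separating_same_sign:
  assumes "sign_separating k f" "1 \<le> a" "a \<le> 2 ^ k" "1 \<le> b" "b \<le> 2 ^ k" "f a = f b" "f a \<noteq> 0"
  shows "sign_vec k a = sign_vec k b"
proof -
  have "in_Aplus a = in_Aplus b"
    using assms(1)[unfolded sign_separating_def, rule_format, OF assms(2-7)] .
  then show ?thesis using sign_vec_eq_iff[OF assms(2-5)] by simp
qed

lemma separating_fibre_sum: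
  assumes f: "sign_separating k f" and t: "1 \<le> t" "t \<le> 2 ^ k" "f t \<noteq> 0" "f t \<le> M"
  shows "hz_map (2 ^ k) M f (sign_vec k) (f t) = sign_vec k t * int (card {s. 1 \<le> s \<and> s \<le> 2 ^ k \<and> f s = f t})"
proof -
  let ?F = "{s. 1 \<le> s \<and> s \<le> 2 ^ k \<and> f s = f t}"
  have "hz_map (2 ^ k) M f (sign_vec k) (f t) = sum (sign_vec k) ?F"
    using t unfolding hz_map_def by simp
  also have "\<dots> = sum (\<lambda>_. sign_vec k t) ?F"
  proof (rule sum.cong[OF refl])
    fix s assume "s \<in> ?F"
    then have s: "1 \<le> s" "s \<le> 2 ^ k" "f s = f t" by auto
    show "sign_vec k s = sign_vec k t"
      by (rule separating_same_sign[OF f s(1,2) t(1,2) s(3)]) (use s(3) t(3) in simp)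
  qed
  finally show ?thesis by simp
qed

lemma separating_fibres_match:
  assumes f: "pointed_map (2 ^ k) M f" and rf: "sign_separating k f" and rg: "sign_separating k g"
    and hz: "hz_map (2 ^ k) M f (sign_vec k) = hz_map (2 ^ k) M g (sign_vec k)"
    and i: "1 \<le> i" "i \<le> 2 ^ k" "f i \<noteq> 0"
  defines "Ff \<equiv> {t. 1 \<le> t \<and> t \<le> 2 ^ k \<and> f t = f i}" and "Fg \<equiv> {t. 1 \<le> t \<and> t \<le> 2 ^ k \<and> g t = f i}"
  shows "card Fg = card Ff" "\<And>t. t \<in> Fg \<Longrightarrow> sign_vec k t = sign_vec k i"
proof -
  have q: "f i \<le> M" using f i unfolding pointed_map_def by auto
  have fin: "finite Ff" "finite Fg" unfolding Ff_def Fg_def by simp_all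
  have si: "sign_vec k i = 1 \<or> sign_vec k i = -1" using sign_vec_val[OF i(1,2)] by simp
  have "i \<in> Ff" using i unfolding Ff_def by auto
  then have cardF: "card Ff \<ge> 1" using card_gt_0_iff[of Ff] fin(1) by auto
  have hf: "hz_map (2 ^ k) M f (sign_vec k) (f i) = sign_vec k i * int (card Ff)"
    using separating_fibre_sum[OF rf i q] unfolding Ff_def by simp
  have hg_sum: "hz_map (2 ^ k) M g (sign_vec k) (f i) = sum (sign_vec k) Fg"
    using q i(3) unfolding hz_map_def Fg_def by simp
  have "Fg \<noteq> {}"
  proof
    assume "Fg = {}"
    then have "sign_vec k i * int (card Ff) = 0" using hg_sum hf hz by simp
    then show False using si cardF by auto
  qed
  then obtain j0 where j0: "1 \<le> j0" "j0 \<le> 2 ^ k" "g j0 = f i" unfolding Fg_def by auto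
  then have cardG: "card Fg \<ge> 1" using card_gt_0_iff[of Fg] fin(2) unfolding Fg_def by auto
  have hg: "hz_map (2 ^ k) M g (sign_vec k) (f i) = sign_vec k j0 * int (card Fg)"
    using separating_fibre_sum[OF rg j0(1,2)] j0 q i(3) unfolding Fg_def by simp
  have sj0: "sign_vec k j0 = 1 \<or> sign_vec k j0 = -1" using sign_vec_val[OF j0(1,2)] by simp
  have eq: "sign_vec k i * int (card Ff) = sign_vec k j0 * int (card Fg)" using hf hg hz by simp
  have same: "sign_vec k j0 = sign_vec k i"
  proof (rule ccontr)
    assume "sign_vec k j0 \<noteq> sign_vec k i"
    then have "sign_vec k j0 = - sign_vec k i" using si sj0 by auto
    then have "sign_vec k i * (int (card Ff) + int (card Fg)) = 0" using eq by (simp add: algebra_simps)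
    then show False using si cardF cardG by auto
  qed
  then show "card Fg = card Ff" using eq si by auto
  fix t assume "t \<in> Fg"
  then have t: "1 \<le> t" "t \<le> 2 ^ k" "g t = g j0" using j0 unfolding Fg_def by auto
  have "sign_vec k t = sign_vec k j0"
    by (rule separating_same_sign[OF rg t(1,2) j0(1,2) t(3)]) (use t(3) j0(3) i(3) in simp)
  then show "sign_vec k t = sign_vec k i" using same by simp
qed

text \<open>If two such maps disagree at a point i with f(i) <> 0, then g sends some point j of
  the same sign as i to f(i), where f does not (pigeonhole on the fibres over f(i)).\<close>

lemma exchange_point:
  assumes f: "pointed_map (2 ^ k) M f" and rf: "sign_separating k f" and rg: "sign_separating k g"
    and hz: "hz_map (2 ^ k) M f (sign_vec k) = hz_map (2 ^ k) M g (sign_vec k)"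
    and i: "1 \<le> i" "i \<le> 2 ^ k" "f i \<noteq> 0" "f i \<noteq> g i"
  obtains j where "1 \<le> j" "j \<le> 2 ^ k" "g j = f i" "f j \<noteq> f i" "in_Aplus i = in_Aplus j"
proof -
  define Ff where "Ff = {t. 1 \<le> t \<and> t \<le> 2 ^ k \<and> f t = f i}"
  define Fg where "Fg = {t. 1 \<le> t \<and> t \<le> 2 ^ k \<and> g t = f i}"
  note match = separating_fibres_match[OF f rf rg hz i(1-3), folded Ff_def Fg_def]
  have fin: "finite Ff" unfolding Ff_def by simp
  have iF: "i \<in> Ff" "i \<notin> Fg" using i unfolding Ff_def Fg_def by auto
  have "\<not> Fg \<subseteq> Ff - {i}"
  proof
    assume "Fg \<subseteq> Ff - {i}"
    then have "card Fg \<le> card (Ff - {i})" using fin by (intro card_mono) simp_all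
    also have "\<dots> < card Ff" by (rule card_Diff1_less[OF fin iF(1)])
    finally show False using match(1) by simp
  qed
  then obtain j where j: "j \<in> Fg" "j \<notin> Ff" using iF(2) by blast
  then have jr: "1 \<le> j" "j \<le> 2 ^ k" "g j = f i" "f j \<noteq> f i" unfolding Fg_def Ff_def by auto
  have "in_Aplus i = in_Aplus j" using match(2)[OF j(1)] sign_vec_eq_iff[OF i(1,2) jr(1,2)] by simp
  then show ?thesis using that jr by blast
qed

lemma transpose_special:
  assumes ij: "1 \<le> i" "i \<le> 2 ^ k" "1 \<le> j" "j \<le> 2 ^ k" and s: "in_Aplus i = in_Aplus j"
  shows "bij_betw (transpose i j) {1..2 ^ k} {1..2 ^ k}"
    "\<forall>t\<in>{1..2 ^ k}. in_Aplus (transpose i j t) = in_Aplus t"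
    "pointed_map (2 ^ k) (2 ^ k) (transpose i j)"
proof -
  show "bij_betw (transpose i j) {1..2 ^ k} {1..2 ^ k}" using ij by (intro bij_betw_transpose_iff) auto
  show "\<forall>t\<in>{1..2 ^ k}. in_Aplus (transpose i j t) = in_Aplus t" using s unfolding transpose_def by auto
  show "pointed_map (2 ^ k) (2 ^ k) (transpose i j)" using ij unfolding transpose_def pointed_map_def by auto
qed

lemma pointed_special_perm:
  assumes "bij_betw \<pi> {1..2 ^ k} {1..2 ^ k}" "\<pi> 0 = 0"
  shows "pointed_map (2 ^ k) (2 ^ k) \<pi>"
  unfolding pointed_map_def
proof (intro conjI allI impI)
  fix i :: nat assume "i \<le> 2 ^ k"
  then show "\<pi> i \<le> 2 ^ k" using assms unfolding bij_betw_def by (cases "i = 0") auto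
qed (rule assms(2))

section \<open>Push-forwards of the powers of a formal difference law\<close>

lemma is_fdlI:
  assumes "r \<in> gelts R 2 n" "gmap R 2 1 (p_map 2) n r = gone R n" "gmap R 2 1 (s_map 1 2 1) n r = gbase R 1 n"
    "gmul R 1 2 n (gmap R 2 1 (p_map 1) n r) r = gmap R 2 2 swap2 n r"
    "gmul R 2 1 n r (gmap R 2 1 (p_map 1) n r) = gmap R 2 2 swap2 n r"
    "\<And>k \<pi>. \<pi> 0 = 0 \<Longrightarrow> bij_betw \<pi> {1..2 ^ k} {1..2 ^ k} \<Longrightarrow> \<forall>i\<in>{1..2 ^ k}. in_Aplus (\<pi> i) = in_Aplus i \<Longrightarrow>
      gmap R (2 ^ k) (2 ^ k) \<pi> n (rpow R n r k) = rpow R n r k"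
    "\<And>k i j l. 1 \<le> i \<Longrightarrow> i < j \<Longrightarrow> j \<le> 2 ^ k \<Longrightarrow> in_Aplus i \<noteq> in_Aplus j \<Longrightarrow> 1 \<le> l \<Longrightarrow> l \<le> 2 ^ k - 1 \<Longrightarrow>
      gmap R (2 ^ k) (2 ^ k - 1) (s_map i j l) n (rpow R n r k) =
      gmap R (2 ^ k - 2) (2 ^ k - 1) (d_map l) n
        (gmap R (2 ^ k - 1) (2 ^ k - 2) (p_map i) n (gmap R (2 ^ k) (2 ^ k - 1) (p_map j) n (rpow R n r k)))"
  shows "is_fdl R n r"
  unfolding is_fdl_def
proof (intro conjI allI impI assms(1-5))
  fix k \<pi> assume "1 \<le> k \<and> \<pi> 0 = 0 \<and> bij_betw \<pi> {1..2 ^ k} {1..2 ^ k} \<and> (\<forall>i\<in>{1..2 ^ k}. in_Aplus (\<pi> i) = in_Aplus i)"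
  then show "gmap R (2 ^ k) (2 ^ k) \<pi> n (rpow R n r k) = rpow R n r k" by (elim conjE) (rule assms(6))
next
  fix k i j l :: nat
  assume "1 \<le> k \<and> 1 \<le> i \<and> i < j \<and> j \<le> 2 ^ k \<and> in_Aplus i \<noteq> in_Aplus j \<and> 1 \<le> l \<and> l \<le> 2 ^ k - 1"
  then show "gmap R (2 ^ k) (2 ^ k - 1) (s_map i j l) n (rpow R n r k) =
      gmap R (2 ^ k - 2) (2 ^ k - 1) (d_map l) n
        (gmap R (2 ^ k - 1) (2 ^ k - 2) (p_map i) n (gmap R (2 ^ k) (2 ^ k - 1) (p_map j) n (rpow R n r k)))"
    by (elim conjE) (rule assms(7))
qed


locale formal_difference_law = gamma_ring +
  fixes n :: nat and r :: 'a
  assumes fdl: "is_fdl R n r"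
begin

lemma law_closed: "r \<in> gelts R 2 n"
  using fdl unfolding is_fdl_def by blast

lemma law_unit: "gmap R 2 1 (p_map 2) n r = gone R n"
  using fdl unfolding is_fdl_def by blast

lemma law_special_invariant:
  "1 \<le> k \<Longrightarrow> \<pi> 0 = 0 \<Longrightarrow> bij_betw \<pi> {1..2 ^ k} {1..2 ^ k} \<Longrightarrow>
    (\<forall>i\<in>{1..2 ^ k}. in_Aplus (\<pi> i) = in_Aplus i) \<Longrightarrow>
    gmap R (2 ^ k) (2 ^ k) \<pi> n (rpow R n r k) = rpow R n r k"
  using fdl unfolding is_fdl_def by blast

lemma law_cancellation:
  "1 \<le> k \<Longrightarrow> 1 \<le> i \<Longrightarrow> i < j \<Longrightarrow> j \<le> 2 ^ k \<Longrightarrow> in_Aplus i \<noteq> in_Aplus j \<Longrightarrow>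
    1 \<le> l \<Longrightarrow> l \<le> 2 ^ k - 1 \<Longrightarrow>
    gmap R (2 ^ k) (2 ^ k - 1) (s_map i j l) n (rpow R n r k) =
    gmap R (2 ^ k - 2) (2 ^ k - 1) (d_map l) n
      (gmap R (2 ^ k - 1) (2 ^ k - 2) (p_map i) n
        (gmap R (2 ^ k) (2 ^ k - 1) (p_map j) n (rpow R n r k)))"
  using fdl unfolding is_fdl_def by blast

lemmas law_rpow_closed = rpow_closed[OF law_closed]

lemma gmap_special_perm:
  assumes k: "1 \<le> k" and \<pi>: "\<pi> 0 = 0" "bij_betw \<pi> {1..2 ^ k} {1..2 ^ k}"
    "\<forall>i\<in>{1..2 ^ k}. in_Aplus (\<pi> i) = in_Aplus i" and f: "pointed_map (2 ^ k) M f"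
  shows "gmap R (2 ^ k) M (f \<circ> \<pi>) n (rpow R n r k) = gmap R (2 ^ k) M f n (rpow R n r k)"
  using gmap_comp[OF pointed_special_perm[OF \<pi>(2,1)] f law_rpow_closed] law_special_invariant[OF k \<pi>]
  by simp

text \<open>A pair of points of opposite sign with a common image may be sent to the base
  point: factor f through s_(i,j,1) and apply the cancellation axiom.\<close>

lemma gmap_cancel_pair:
  assumes k: "1 \<le> k" and f: "pointed_map (2 ^ k) M f"
    and ij: "1 \<le> i" "i < j" "j \<le> 2 ^ k" and sg: "in_Aplus i \<noteq> in_Aplus j" and fij: "f i = f j"
  shows "gmap R (2 ^ k) M f n (rpow R n r k) = gmap R (2 ^ k) M (f(i := 0, j := 0)) n (rpow R n r k)"
proof -
  define N :: nat where "N = 2 ^ k"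
  have N2: "2 \<le> N" unfolding N_def using k by (metis power_one_right power_increasing one_le_numeral)
  define h where "h u = f (merge_section i j u)" for u
  have hpm: "pointed_map (N - 1) M h" unfolding pointed_map_def h_def
  proof (intro conjI allI impI)
    show "f (merge_section i j 0) = 0" using f unfolding merge_section_def pointed_map_def by simp
    fix u assume "u \<le> N - 1"
    then have "merge_section i j u \<le> N" using merge_section_bound[OF ij(1,2), of N u] ij(3) unfolding N_def by simp
    then show "f (merge_section i j u) \<le> M" using f unfolding pointed_map_def N_def by simp
  qed
  have spm: "pointed_map N (N - 1) (s_map i j 1)" using pointed_s[OF ij(1,2) _ _, of N 1] ij(3) N2 unfolding N_def by simp
  have pjm: "pointed_map N (N - 1) (p_map j)" using pointed_p[of j N] ij unfolding N_def by simp
  have "i \<le> N - 1" using ij unfolding N_def by simp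
  then have "pointed_map (N - 1) (N - 1 - 1) (p_map i)" using pointed_p ij(1) by blast
  then have pim: "pointed_map (N - 1) (N - 2) (p_map i)" by (simp add: numeral_2_eq_2)
  have dm: "pointed_map (N - 2) (N - 1) (d_map 1)" using pointed_d[of 1 "N - 1"] N2 by (simp add: numeral_2_eq_2)
  have x: "rpow R n r k \<in> gelts R N n" using law_rpow_closed unfolding N_def .
  have f0: "f 0 = 0" using f unfolding pointed_map_def by simp
  note factor = merge_section_factorisation[OF ij(1,2) f0 fij]
  have "gmap R N M f n (rpow R n r k) = gmap R N M (h \<circ> s_map i j 1) n (rpow R n r k)"
    by (rule gmap_cong[OF _ x]) (unfold comp_def h_def, rule factor(1))
  also have "\<dots> = gmap R (N - 1) M h n (gmap R N (N - 1) (s_map i j 1) n (rpow R n r k))"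
    using gmap_comp[OF spm hpm x] by simp
  also have "\<dots> = gmap R (N - 1) M h n (gmap R (N - 2) (N - 1) (d_map 1) n
      (gmap R (N - 1) (N - 2) (p_map i) n (gmap R N (N - 1) (p_map j) n (rpow R n r k))))"
    using law_cancellation[OF k ij sg, of 1] N2 unfolding N_def by simp
  also have "\<dots> = gmap R N M (h \<circ> (d_map 1 \<circ> p_map i \<circ> p_map j)) n (rpow R n r k)"
    using gmap_comp[OF dm hpm gmap_closed[OF pim gmap_closed[OF pjm x]]]
      gmap_comp[OF pim pointed_comp[OF dm hpm] gmap_closed[OF pjm x]]
      gmap_comp[OF pjm pointed_comp[OF pim pointed_comp[OF dm hpm]] x]
    by (simp add: o_assoc)
  also have "\<dots> = gmap R N M (f(i := 0, j := 0)) n (rpow R n r k)"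
    by (rule gmap_cong[OF _ x]) (unfold comp_def h_def, rule factor(2)[symmetric])
  finally show ?thesis unfolding N_def .
qed

lemma make_separating:
  assumes k: "1 \<le> k" and f: "pointed_map (2 ^ k) M f"
  obtains f' where "pointed_map (2 ^ k) M f'" "sign_separating k f'"
    "hz_map (2 ^ k) M f' (sign_vec k) = hz_map (2 ^ k) M f (sign_vec k)"
    "gmap R (2 ^ k) M f' n (rpow R n r k) = gmap R (2 ^ k) M f n (rpow R n r k)"
  using f
proof (induction "card {t. 1 \<le> t \<and> t \<le> 2 ^ k \<and> f t \<noteq> 0}" arbitrary: f thesis rule: less_induct)
  case less
  note f = less.prems(2)
  show ?case
  proof (cases "sign_separating k f")
    case True then show ?thesis using less.prems(1)[OF f True] by blast
  next
    case False
    then obtain a b where ab: "1 \<le> a" "a \<le> 2 ^ k" "1 \<le> b" "b \<le> 2 ^ k" "f a = f b" "f a \<noteq> 0"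
      "in_Aplus a \<noteq> in_Aplus b" unfolding sign_separating_def by blast
    then have "a \<noteq> b" by auto
    define i where "i = min a b"
    define j where "j = max a b"
    have ij: "1 \<le> i" "i < j" "j \<le> 2 ^ k" "in_Aplus i \<noteq> in_Aplus j" "f i = f j" "f i \<noteq> 0"
      using ab \<open>a \<noteq> b\<close> unfolding i_def j_def by (auto simp: min_def max_def)
    define f' where "f' = f(i := 0, j := 0)"
    have pm': "pointed_map (2 ^ k) M f'" unfolding f'_def by (rule pointed_map_remove_pair[OF f])
    have g: "gmap R (2 ^ k) M f' n (rpow R n r k) = gmap R (2 ^ k) M f n (rpow R n r k)"
      unfolding f'_def by (rule gmap_cancel_pair[OF k f ij(1-5), symmetric])
    have restore: "f'(i := f i, j := f i) = f" unfolding f'_def using ij(5) by (simp add: fun_eq_iff)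
    have "sign_vec k i + sign_vec k j = 0"
      using ij sign_vec_val[of i k] sign_vec_val[of j k] by auto
    moreover have "f i \<le> M" using f ij unfolding pointed_map_def by auto
    ultimately have "hz_map (2 ^ k) M (f'(i := f i, j := f i)) (sign_vec k) = hz_map (2 ^ k) M f' (sign_vec k)"
      using ij by (intro hz_map_cancel_pair) (simp_all add: f'_def)
    then have h: "hz_map (2 ^ k) M f' (sign_vec k) = hz_map (2 ^ k) M f (sign_vec k)"
      unfolding restore by simp
    have "{t. 1 \<le> t \<and> t \<le> 2 ^ k \<and> f' t \<noteq> 0} \<subseteq> {t. 1 \<le> t \<and> t \<le> 2 ^ k \<and> f t \<noteq> 0} - {i}"
      unfolding f'_def by auto
    then have "card {t. 1 \<le> t \<and> t \<le> 2 ^ k \<and> f' t \<noteq> 0} < card {t. 1 \<le> t \<and> t \<le> 2 ^ k \<and> f t \<noteq> 0}"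
      using ij by (intro le_less_trans[OF card_mono card_Diff1_less]) auto
    from less.hyps[OF this _ pm'] show ?thesis using less.prems(1) g h by metis
  qed
qed

lemma separating_exchange:
  assumes k: "1 \<le> k" and f: "pointed_map (2 ^ k) M f" and g: "pointed_map (2 ^ k) M g"
    and rf: "sign_separating k f" and rg: "sign_separating k g"
    and hz: "hz_map (2 ^ k) M f (sign_vec k) = hz_map (2 ^ k) M g (sign_vec k)"
    and i: "1 \<le> i" "i \<le> 2 ^ k" "f i \<noteq> 0" "f i \<noteq> g i"
  obtains g' where "pointed_map (2 ^ k) M g'" "sign_separating k g'"
    "hz_map (2 ^ k) M g' (sign_vec k) = hz_map (2 ^ k) M g (sign_vec k)"
    "gmap R (2 ^ k) M g' n (rpow R n r k) = gmap R (2 ^ k) M g n (rpow R n r k)"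
    "disagreement k f g' \<subset> disagreement k f g"
proof -
  obtain j where j: "1 \<le> j" "j \<le> 2 ^ k" "g j = f i" "f j \<noteq> f i" "in_Aplus i = in_Aplus j"
    using exchange_point[OF f rf rg hz i] .
  note T = transpose_special[OF i(1,2) j(1,2,5)]
  define g' where "g' = g \<circ> transpose i j"
  have "pointed_map (2 ^ k) M g'" unfolding g'_def by (rule pointed_comp[OF T(3) g])
  moreover have "sign_separating k g'" unfolding sign_separating_def
  proof (intro allI impI)
    fix a b assume a: "1 \<le> a" "a \<le> 2 ^ k" and b: "1 \<le> b" "b \<le> 2 ^ k" and e: "g' a = g' b" "g' a \<noteq> 0"
    have "transpose i j a \<in> {1..2 ^ k}" "transpose i j b \<in> {1..2 ^ k}"
      using a b T(1) unfolding bij_betw_def by auto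
    then have "in_Aplus (transpose i j a) = in_Aplus (transpose i j b)"
      using rg e unfolding sign_separating_def g'_def by auto
    then show "in_Aplus a = in_Aplus b" using T(2) a b by auto
  qed
  moreover have "hz_map (2 ^ k) M g' (sign_vec k) = hz_map (2 ^ k) M g (sign_vec k)"
    unfolding g'_def using hz_map_comp[OF T(3) g, of "sign_vec k", symmetric] hz_map_special_perm[OF T(1,2)]
    by simp
  moreover have "gmap R (2 ^ k) M g' n (rpow R n r k) = gmap R (2 ^ k) M g n (rpow R n r k)"
    unfolding g'_def by (rule gmap_special_perm[OF k _ T(1,2) g]) (use i j in \<open>simp add: transpose_def\<close>)
  moreover have "disagreement k f g' \<subset> disagreement k f g"
  proof
    show "disagreement k f g' \<subseteq> disagreement k f g"
      using j unfolding disagreement_def g'_def transpose_def by auto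
    have "i \<in> disagreement k f g" "i \<notin> disagreement k f g'"
      using i j unfolding disagreement_def g'_def by auto
    then show "disagreement k f g' \<noteq> disagreement k f g" by blast
  qed
  ultimately show ?thesis using that by blast
qed

lemma separating_unique:
  assumes k: "1 \<le> k"
  shows "pointed_map (2 ^ k) M f \<Longrightarrow> pointed_map (2 ^ k) M g \<Longrightarrow>
    sign_separating k f \<Longrightarrow> sign_separating k g \<Longrightarrow>
    hz_map (2 ^ k) M f (sign_vec k) = hz_map (2 ^ k) M g (sign_vec k) \<Longrightarrow>
    gmap R (2 ^ k) M f n (rpow R n r k) = gmap R (2 ^ k) M g n (rpow R n r k)"
proof (induction "card (disagreement k f g)" arbitrary: f g rule: less_induct)
  case less
  note f = less.prems(1) and g = less.prems(2) and rf = less.prems(3) and rg = less.prems(4)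
    and hz = less.prems(5)
  have fin: "finite (disagreement k f' g')" for f' g' unfolding disagreement_def by simp
  show ?case
  proof (cases "disagreement k f g = {}")
    case True
    show ?thesis
    proof (rule gmap_cong[OF _ law_rpow_closed])
      fix t :: nat assume "t \<le> 2 ^ k"
      then show "f t = g t" using f g True unfolding pointed_map_def disagreement_def
        by (cases "t = 0") auto
    qed
  next
    case False
    then obtain t where t: "1 \<le> t" "t \<le> 2 ^ k" "f t \<noteq> g t" unfolding disagreement_def by auto
    show ?thesis
    proof (cases "f t = 0")
      case False
      obtain g' where g': "pointed_map (2 ^ k) M g'" "sign_separating k g'"
        "hz_map (2 ^ k) M g' (sign_vec k) = hz_map (2 ^ k) M g (sign_vec k)"
        "gmap R (2 ^ k) M g' n (rpow R n r k) = gmap R (2 ^ k) M g n (rpow R n r k)"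
        "disagreement k f g' \<subset> disagreement k f g"
        using separating_exchange[OF k f g rf rg hz t(1,2) False t(3)] .
      have "card (disagreement k f g') < card (disagreement k f g)" using g'(5) fin by (simp add: psubset_card_mono)
      from less.hyps[OF this f g'(1) rf g'(2)] g'(3,4) hz show ?thesis by simp
    next
      case True
      then have gt: "g t \<noteq> 0" "g t \<noteq> f t" using t by auto
      obtain f' where f': "pointed_map (2 ^ k) M f'" "sign_separating k f'"
        "hz_map (2 ^ k) M f' (sign_vec k) = hz_map (2 ^ k) M f (sign_vec k)"
        "gmap R (2 ^ k) M f' n (rpow R n r k) = gmap R (2 ^ k) M f n (rpow R n r k)"
        "disagreement k g f' \<subset> disagreement k g f"
        using separating_exchange[OF k g f rg rf hz[symmetric] t(1,2) gt] .
      have sym: "disagreement k a b = disagreement k b a" for a b unfolding disagreement_def by auto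
      have "card (disagreement k f' g) < card (disagreement k f g)" using f'(5) fin sym by (metis psubset_card_mono)
      from less.hyps[OF this f'(1) g f'(2) rg] f'(3,4) hz show ?thesis by simp
    qed
  qed
qed

text \<open>The push-forward f_*(r^a) only depends on f_*(sigma_a): raise both presentations to
  a common exponent K >= 1, make them sign-separating and compare.\<close>

theorem gmap_rpow_well_defined:
  assumes f: "pointed_map (2 ^ a) M f" and g: "pointed_map (2 ^ b) M g"
    and hz: "hz_map (2 ^ a) M f (sign_vec a) = hz_map (2 ^ b) M g (sign_vec b)"
  shows "gmap R (2 ^ a) M f n (rpow R n r a) = gmap R (2 ^ b) M g n (rpow R n r b)"
proof -
  define K where "K = Suc (max a b)"
  have aK: "a \<le> K" and bK: "b \<le> K" and k: "1 \<le> K" unfolding K_def by auto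
  obtain f' where f': "pointed_map (2 ^ K) M f'" "sign_separating K f'"
    "hz_map (2 ^ K) M f' (sign_vec K) = hz_map (2 ^ K) M (f \<circ> trunc_map a) (sign_vec K)"
    "gmap R (2 ^ K) M f' n (rpow R n r K) = gmap R (2 ^ K) M (f \<circ> trunc_map a) n (rpow R n r K)"
    using make_separating[OF k pointed_comp[OF pointed_trunc_map f]] .
  obtain g' where g': "pointed_map (2 ^ K) M g'" "sign_separating K g'"
    "hz_map (2 ^ K) M g' (sign_vec K) = hz_map (2 ^ K) M (g \<circ> trunc_map b) (sign_vec K)"
    "gmap R (2 ^ K) M g' n (rpow R n r K) = gmap R (2 ^ K) M (g \<circ> trunc_map b) n (rpow R n r K)"
    using make_separating[OF k pointed_comp[OF pointed_trunc_map g]] .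
  have "hz_map (2 ^ K) M f' (sign_vec K) = hz_map (2 ^ K) M g' (sign_vec K)"
    using f'(3) g'(3) hz_map_raise[OF aK f] hz_map_raise[OF bK g] hz by simp
  then have "gmap R (2 ^ K) M f' n (rpow R n r K) = gmap R (2 ^ K) M g' n (rpow R n r K)"
    by (rule separating_unique[OF k f'(1) g'(1) f'(2) g'(2)])
  then show ?thesis
    using f'(4) g'(4) gmap_rpow_raise[OF law_closed law_unit aK f] gmap_rpow_raise[OF law_closed law_unit bK g]
    by simp
qed

end

section \<open>Multiplicative maps out of HZ\<close>

context gamma_ring
begin

lemma mult_map_closed: "mult_map R n \<phi> \<Longrightarrow> v \<in> hz_elts m \<Longrightarrow> \<phi> m v \<in> gelts R m n"
  unfolding mult_map_def by blast

lemma mult_map_zero: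
  assumes "mult_map R n \<phi>" shows "\<phi> m (\<lambda>_. 0) = gbase R m n"
proof -
  have "\<forall>m. \<phi> m (\<lambda>_. 0) = gbase R m n" using assms unfolding mult_map_def by (elim conjE)
  then show ?thesis by simp
qed

lemma mult_map_one: "mult_map R n \<phi> \<Longrightarrow> \<phi> 1 hz_one = gone R n"
  unfolding mult_map_def by (elim conjE)

lemma mult_map_natural: "mult_map R n \<phi> \<Longrightarrow> pointed_map m k f \<Longrightarrow> v \<in> hz_elts m \<Longrightarrow>
    \<phi> k (hz_map m k f v) = gmap R m k f n (\<phi> m v)"
  unfolding mult_map_def by blast

lemma mult_map_mul: "mult_map R n \<phi> \<Longrightarrow> v \<in> hz_elts m \<Longrightarrow> w \<in> hz_elts k \<Longrightarrow>
    \<phi> (m * k) (hz_mul m k v w) = gmul R m k n (\<phi> m v) (\<phi> k w)"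
  unfolding mult_map_def by blast

lemma mult_map_sign_vec:
  assumes phi: "mult_map R n \<phi>"
  shows "\<phi> (2 ^ k) (sign_vec k) = rpow R n (\<phi> 2 (sign_vec 1)) k"
proof (induction k)
  case 0 then show ?case using mult_map_one[OF phi] sign_vec_0 by simp
next
  case (Suc k)
  have "sign_vec (Suc k) = hz_mul (2 ^ k) 2 (sign_vec k) (sign_vec 1)" using sign_vec_mul[of k 1] by simp
  then have "\<phi> (2 ^ k * 2) (sign_vec (Suc k)) = gmul R (2 ^ k) 2 n (\<phi> (2 ^ k) (sign_vec k)) (\<phi> 2 (sign_vec 1))"
    using mult_map_mul[OF phi sign_vec_closed sign_vec_closed[of 1]] by simp
  then show ?case using Suc by (simp add: mult.commute)
qed

text \<open>Since HZ is generated by sigma_1, a multiplicative map is determined by the image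
  of sigma_1.\<close>

lemma mult_map_eqI:
  assumes phi: "mult_map R n \<phi>" and psi: "mult_map R n \<psi>" and e: "\<phi> 2 (sign_vec 1) = \<psi> 2 (sign_vec 1)"
  shows "\<phi> = \<psi>"
proof (intro ext)
  fix m v
  show "\<phi> m v = \<psi> m v"
  proof (cases "v \<in> hz_elts m")
    case False then show ?thesis using phi psi unfolding mult_map_def by simp
  next
    case True
    obtain k f where kf: "pointed_map (2 ^ k) m f" "hz_map (2 ^ k) m f (sign_vec k) = v"
      using sign_vec_presentation[OF True] by blast
    have "\<phi> m v = gmap R (2 ^ k) m f n (rpow R n (\<phi> 2 (sign_vec 1)) k)"
      using mult_map_natural[OF phi kf(1) sign_vec_closed] mult_map_sign_vec[OF phi] kf(2) by simp
    moreover have "\<psi> m v = gmap R (2 ^ k) m f n (rpow R n (\<psi> 2 (sign_vec 1)) k)"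
      using mult_map_natural[OF psi kf(1) sign_vec_closed] mult_map_sign_vec[OF psi] kf(2) by simp
    ultimately show ?thesis using e by simp
  qed
qed

end

text \<open>The identities in HZ behind axioms (1) and (2) of a formal difference law.\<close>

lemma sum_fibre_2: "sum v {i. 1 \<le> i \<and> i \<le> (2::nat) \<and> P i} = (if P 1 then v 1 else 0) + (if P 2 then v 2 else 0)"
proof -
  have e: "{i. 1 \<le> i \<and> i \<le> (2::nat) \<and> P i} = (if P 1 then {1} else {}) \<union> (if P 2 then {2} else {})"
    by (auto simp: le_Suc_eq numeral_2_eq_2)
  show ?thesis unfolding e by (auto simp: add.commute)
qed

definition neg_unit :: "nat \<Rightarrow> int" where
  "neg_unit = (\<lambda>j. if j = 1 then -1 else 0)"

definition swapped_sign :: "nat \<Rightarrow> int" where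
  "swapped_sign = (\<lambda>p. if p = 1 then -1 else if p = 2 then 1 else 0)"

lemma hz_sign_vec_1_identities:
  "hz_map 2 1 (p_map 2) (sign_vec 1) = hz_one"
  "hz_map 2 1 (s_map 1 2 1) (sign_vec 1) = (\<lambda>_. 0)"
  "hz_map 2 1 (p_map 1) (sign_vec 1) = neg_unit"
  "hz_map 2 2 swap2 (sign_vec 1) = swapped_sign"
  "hz_mul 1 2 neg_unit (sign_vec 1) = swapped_sign"
  "hz_mul 2 1 (sign_vec 1) neg_unit = swapped_sign"
proof -
  have s: "sign_vec (Suc 0) (Suc 0) = 1" "sign_vec (Suc 0) 2 = -1" using sign_vec_1 by (simp_all add: fun_eq_iff)
  show "hz_map 2 1 (p_map 2) (sign_vec 1) = hz_one"
    by (rule ext, simp only: hz_map_def sum_fibre_2) (simp add: s p_map_def hz_one_def)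
  show "hz_map 2 1 (s_map 1 2 1) (sign_vec 1) = (\<lambda>_. 0)"
    by (rule ext, simp only: hz_map_def sum_fibre_2) (simp add: s s_map_def)
  show "hz_map 2 1 (p_map 1) (sign_vec 1) = neg_unit"
    by (rule ext, simp only: hz_map_def sum_fibre_2) (simp add: s p_map_def neg_unit_def)
  show "hz_map 2 2 swap2 (sign_vec 1) = swapped_sign"
    by (rule ext, simp only: hz_map_def sum_fibre_2) (auto simp: s swap2_def swapped_sign_def)
  show "hz_mul 1 2 neg_unit (sign_vec 1) = swapped_sign" "hz_mul 2 1 (sign_vec 1) neg_unit = swapped_sign"
    unfolding hz_mul_def neg_unit_def swapped_sign_def sign_vec_1 by (auto intro!: ext simp: le_Suc_eq numeral_2_eq_2)
qed

context gamma_ring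
begin

lemma mult_map_special_invariant:
  assumes phi: "mult_map R n \<phi>" and \<pi>: "\<pi> 0 = 0" "bij_betw \<pi> {1..2 ^ k} {1..2 ^ k}"
    "\<forall>i\<in>{1..2 ^ k}. in_Aplus (\<pi> i) = in_Aplus i"
  shows "gmap R (2 ^ k) (2 ^ k) \<pi> n (\<phi> (2 ^ k) (sign_vec k)) = \<phi> (2 ^ k) (sign_vec k)"
  using mult_map_natural[OF phi pointed_special_perm[OF \<pi>(2,1)] sign_vec_closed]
    hz_map_special_perm[OF \<pi>(2,3)] by simp

text \<open>Axiom (4): in HZ, s_(i,j,l) and d_l p_i p_j agree on sigma_k when i and j carry
  opposite signs.\<close>

lemma mult_map_cancellation:
  assumes phi: "mult_map R n \<phi>"
    and ij: "1 \<le> i" "i < j" "j \<le> 2 ^ k" "in_Aplus i \<noteq> in_Aplus j" and l: "1 \<le> l" "l \<le> 2 ^ k - 1"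
  shows "gmap R (2 ^ k) (2 ^ k - 1) (s_map i j l) n (\<phi> (2 ^ k) (sign_vec k)) =
    gmap R (2 ^ k - 2) (2 ^ k - 1) (d_map l) n
      (gmap R (2 ^ k - 1) (2 ^ k - 2) (p_map i) n
        (gmap R (2 ^ k) (2 ^ k - 1) (p_map j) n (\<phi> (2 ^ k) (sign_vec k))))"
proof -
  define N :: nat where "N = 2 ^ k"
  have sm: "pointed_map N (N - 1) (s_map i j l)" using pointed_s[OF ij(1,2) _ l(1)] ij(3) l(2) unfolding N_def by simp
  have pj: "pointed_map N (N - 1) (p_map j)" using pointed_p[of j N] ij unfolding N_def by simp
  have "i \<le> N - 1" using ij unfolding N_def by simp
  then have "pointed_map (N - 1) (N - 1 - 1) (p_map i)" using pointed_p ij(1) by blast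
  then have pi: "pointed_map (N - 1) (N - 2) (p_map i)" by (simp add: numeral_2_eq_2)
  have "pointed_map (N - 1 - 1) (N - 1) (d_map l)" using pointed_d[of l "N - 1"] l by simp
  then have dl: "pointed_map (N - 2) (N - 1) (d_map l)" by (simp add: numeral_2_eq_2)
  have sk: "sign_vec k \<in> hz_elts N" using sign_vec_closed unfolding N_def .
  note fact = s_map_factorisation[OF ij(1,2) l(1)]
  have L: "gmap R N (N - 1) (s_map i j l) n (\<phi> N (sign_vec k)) = \<phi> (N - 1) (hz_map N (N - 1) (s_map i j l) (sign_vec k))"
    using mult_map_natural[OF phi sm sk] by simp
  have R: "gmap R (N - 2) (N - 1) (d_map l) n (gmap R (N - 1) (N - 2) (p_map i) n (gmap R N (N - 1) (p_map j) n (\<phi> N (sign_vec k))))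
     = \<phi> (N - 1) (hz_map (N - 2) (N - 1) (d_map l) (hz_map (N - 1) (N - 2) (p_map i) (hz_map N (N - 1) (p_map j) (sign_vec k))))"
    using mult_map_natural[OF phi pj sk] mult_map_natural[OF phi pi hz_map_closed] mult_map_natural[OF phi dl hz_map_closed]
    by simp
  have comp: "hz_map (N - 2) (N - 1) (d_map l) (hz_map (N - 1) (N - 2) (p_map i) (hz_map N (N - 1) (p_map j) (sign_vec k)))
      = hz_map N (N - 1) (d_map l \<circ> p_map i \<circ> p_map j) (sign_vec k)"
    using hz_map_comp[OF pi dl] hz_map_comp[OF pj pointed_comp[OF pi dl]] by (simp add: o_assoc)
  have opp: "sign_vec k i + sign_vec k j = 0"
    using ij sign_vec_val[of i k] sign_vec_val[of j k] unfolding N_def by auto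
  have "hz_map N (N - 1) ((d_map l \<circ> p_map i \<circ> p_map j)(i := l, j := l)) (sign_vec k)
      = hz_map N (N - 1) (d_map l \<circ> p_map i \<circ> p_map j) (sign_vec k)"
    by (rule hz_map_cancel_pair[where f = "d_map l \<circ> p_map i \<circ> p_map j" and i = i and j = j, OF fact(2,3)])
      (use ij l opp in \<open>simp_all add: N_def\<close>)
  then have "hz_map N (N - 1) (s_map i j l) (sign_vec k) = hz_map N (N - 1) (d_map l \<circ> p_map i \<circ> p_map j) (sign_vec k)"
    unfolding fact(1) .
  then show ?thesis using L R comp unfolding N_def by simp
qed

theorem mult_map_law:
  assumes phi: "mult_map R n \<phi>"
  shows "is_fdl R n (\<phi> 2 (sign_vec 1))"
proof -
  define r where "r = \<phi> 2 (sign_vec 1)"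
  note hz = hz_sign_vec_1_identities
  have s1: "sign_vec 1 \<in> hz_elts 2" using sign_vec_closed[of 1] by simp
  have neg: "neg_unit \<in> hz_elts 1" unfolding hz(3)[symmetric] by (rule hz_map_closed)
  have rk: "\<phi> (2 ^ k) (sign_vec k) = rpow R n r k" for k unfolding r_def by (rule mult_map_sign_vec[OF phi])
  have p: "pointed_map 2 1 (p_map 2)" "pointed_map 2 1 (p_map 1)" using pointed_p[of 2 2] pointed_p[of 1 2] by auto
  have s: "pointed_map 2 1 (s_map 1 2 1)" using pointed_s[of 1 2 2 1] by simp
  have p1: "gmap R 2 1 (p_map 1) n r = \<phi> 1 neg_unit"
    using mult_map_natural[OF phi p(2) s1] hz(3) unfolding r_def by simp
  have sw: "gmap R 2 2 swap2 n r = \<phi> 2 swapped_sign"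
    using mult_map_natural[OF phi pointed_swap2 s1] hz(4) unfolding r_def by simp
  show ?thesis unfolding r_def[symmetric]
  proof (rule is_fdlI)
    show "r \<in> gelts R 2 n" unfolding r_def by (rule mult_map_closed[OF phi s1])
    show "gmap R 2 1 (p_map 2) n r = gone R n"
      using mult_map_natural[OF phi p(1) s1] hz(1) mult_map_one[OF phi] unfolding r_def by simp
    show "gmap R 2 1 (s_map 1 2 1) n r = gbase R 1 n"
      using mult_map_natural[OF phi s s1] hz(2) mult_map_zero[OF phi] unfolding r_def by simp
    show "gmul R 1 2 n (gmap R 2 1 (p_map 1) n r) r = gmap R 2 2 swap2 n r"
      using mult_map_mul[OF phi neg s1] hz(5) p1 sw unfolding r_def by simp
    show "gmul R 2 1 n r (gmap R 2 1 (p_map 1) n r) = gmap R 2 2 swap2 n r"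
      using mult_map_mul[OF phi s1 neg] hz(6) p1 sw unfolding r_def by simp
    show "gmap R (2 ^ k) (2 ^ k) \<pi> n (rpow R n r k) = rpow R n r k"
      if "\<pi> 0 = 0" "bij_betw \<pi> {1..2 ^ k} {1..2 ^ k}" "\<forall>i\<in>{1..2 ^ k}. in_Aplus (\<pi> i) = in_Aplus i" for k \<pi>
      using mult_map_special_invariant[OF phi that] unfolding rk .
    show "gmap R (2 ^ k) (2 ^ k - 1) (s_map i j l) n (rpow R n r k) =
        gmap R (2 ^ k - 2) (2 ^ k - 1) (d_map l) n
          (gmap R (2 ^ k - 1) (2 ^ k - 2) (p_map i) n (gmap R (2 ^ k) (2 ^ k - 1) (p_map j) n (rpow R n r k)))"
      if "1 \<le> i" "i < j" "j \<le> 2 ^ k" "in_Aplus i \<noteq> in_Aplus j" "1 \<le> l" "l \<le> 2 ^ k - 1" for k i j l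
      using mult_map_cancellation[OF phi that] unfolding rk .
  qed
qed

end

text \<open>phi(v) := f_*(r^k) for any presentation v = f_*(sigma_k).\<close>

definition classifying_map :: "'a gring \<Rightarrow> nat \<Rightarrow> 'a \<Rightarrow> nat \<Rightarrow> (nat \<Rightarrow> int) \<Rightarrow> 'a" where
  "classifying_map R n r m v = (if v \<in> hz_elts m then
     (let kf = (SOME kf. pointed_map (2 ^ fst kf) m (snd kf) \<and> hz_map (2 ^ fst kf) m (snd kf) (sign_vec (fst kf)) = v)
      in gmap R (2 ^ fst kf) m (snd kf) n (rpow R n r (fst kf))) else undefined)"

context formal_difference_law
begin

lemma classifying_map_presentation:
  assumes f: "pointed_map (2 ^ k) m f"
  shows "classifying_map R n r m (hz_map (2 ^ k) m f (sign_vec k)) = gmap R (2 ^ k) m f n (rpow R n r k)"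
proof -
  let ?v = "hz_map (2 ^ k) m f (sign_vec k)"
  let ?P = "\<lambda>kf. pointed_map (2 ^ fst kf) m (snd kf) \<and> hz_map (2 ^ fst kf) m (snd kf) (sign_vec (fst kf)) = ?v"
  have "?P (k, f)" using f by simp
  then have P: "?P (SOME kf. ?P kf)" by (rule someI[of ?P "(k, f)"])
  have "classifying_map R n r m ?v =
      gmap R (2 ^ fst (SOME kf. ?P kf)) m (snd (SOME kf. ?P kf)) n (rpow R n r (fst (SOME kf. ?P kf)))"
    unfolding classifying_map_def if_P[OF hz_map_closed] Let_def by (rule refl)
  also have "\<dots> = gmap R (2 ^ k) m f n (rpow R n r k)"
    by (rule gmap_rpow_well_defined[OF conjunct1[OF P] f conjunct2[OF P]])
  finally show ?thesis .
qed

text \<open>Naturality and multiplicativity are inherited from the push-forwards of powers of r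
  via a presentation of the argument(s).\<close>

lemma classifying_map_natural:
  assumes f: "pointed_map m k f" and v: "v \<in> hz_elts m"
  shows "classifying_map R n r k (hz_map m k f v) = gmap R m k f n (classifying_map R n r m v)"
proof -
  obtain a g where g: "pointed_map (2 ^ a) m g" "hz_map (2 ^ a) m g (sign_vec a) = v"
    using sign_vec_presentation[OF v] by blast
  have "hz_map m k f v = hz_map (2 ^ a) k (f \<circ> g) (sign_vec a)"
    unfolding g(2)[symmetric] by (rule hz_map_comp[OF g(1) f])
  then have "classifying_map R n r k (hz_map m k f v) = gmap R (2 ^ a) k (f \<circ> g) n (rpow R n r a)"
    using classifying_map_presentation[OF pointed_comp[OF g(1) f]] by simp
  also have "\<dots> = gmap R m k f n (gmap R (2 ^ a) m g n (rpow R n r a))"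
    using gmap_comp[OF g(1) f law_rpow_closed] by simp
  also have "\<dots> = gmap R m k f n (classifying_map R n r m v)"
    using classifying_map_presentation[OF g(1)] g(2) by simp
  finally show ?thesis .
qed

lemma classifying_map_mul:
  assumes v: "v \<in> hz_elts m" and w: "w \<in> hz_elts k"
  shows "classifying_map R n r (m * k) (hz_mul m k v w) =
    gmul R m k n (classifying_map R n r m v) (classifying_map R n r k w)"
proof -
  obtain a f where f: "pointed_map (2 ^ a) m f" "hz_map (2 ^ a) m f (sign_vec a) = v"
    using sign_vec_presentation[OF v] by blast
  obtain b g where g: "pointed_map (2 ^ b) k g" "hz_map (2 ^ b) k g (sign_vec b) = w"
    using sign_vec_presentation[OF w] by blast
  let ?h = "smash_map (2 ^ a) (2 ^ b) m f g"
  have pm: "pointed_map (2 ^ (a + b)) (m * k) ?h"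
    using pointed_smash[OF f(1) g(1)] by (simp add: power_add)
  have "hz_mul m k v w = hz_map (2 ^ a * 2 ^ b) (m * k) ?h (hz_mul (2 ^ a) (2 ^ b) (sign_vec a) (sign_vec b))"
    using hz_map_hz_mul[OF f(1) g(1)] f(2) g(2) by simp
  then have "hz_mul m k v w = hz_map (2 ^ (a + b)) (m * k) ?h (sign_vec (a + b))"
    by (simp add: sign_vec_mul power_add)
  then have "classifying_map R n r (m * k) (hz_mul m k v w) = gmap R (2 ^ (a + b)) (m * k) ?h n (rpow R n r (a + b))"
    using classifying_map_presentation[OF pm] by simp
  also have "\<dots> = gmap R (2 ^ a * 2 ^ b) (m * k) ?h n (gmul R (2 ^ a) (2 ^ b) n (rpow R n r a) (rpow R n r b))"
    by (simp add: rpow_add[OF law_closed] power_add)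
  also have "\<dots> = gmul R m k n (gmap R (2 ^ a) m f n (rpow R n r a)) (gmap R (2 ^ b) k g n (rpow R n r b))"
    by (rule gmap_gmul[OF f(1) g(1) law_rpow_closed law_rpow_closed])
  also have "\<dots> = gmul R m k n (classifying_map R n r m v) (classifying_map R n r k w)"
    using classifying_map_presentation[OF f(1)] classifying_map_presentation[OF g(1)] f(2) g(2) by simp
  finally show ?thesis .
qed

theorem classifying_map_mult_map: "mult_map R n (classifying_map R n r)"
  unfolding mult_map_def
proof (intro conjI allI impI)
  fix m v assume v: "v \<in> hz_elts m"
  obtain k f where f: "pointed_map (2 ^ k) m f" "hz_map (2 ^ k) m f (sign_vec k) = v"
    using sign_vec_presentation[OF v] by blast
  show "classifying_map R n r m v \<in> gelts R m n"
    using classifying_map_presentation[OF f(1)] f(2) gmap_closed[OF f(1) law_rpow_closed] by simp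
next
  fix m v assume "v \<notin> hz_elts m" then show "classifying_map R n r m v = undefined"
    unfolding classifying_map_def by simp
next
  fix m
  show "classifying_map R n r m (\<lambda>_. 0) = gbase R m n"
    using classifying_map_presentation[OF pointed_zero[of "2 ^ 0" m]] gmap_zero_map[OF law_rpow_closed[of 0]]
    by (simp add: hz_map_zero_map)
next
  have "hz_map (2 ^ 0) 1 id (sign_vec 0) = hz_one" using hz_map_id[OF sign_vec_closed[of 0]] sign_vec_0 by simp
  then show "classifying_map R n r 1 hz_one = gone R n"
    using classifying_map_presentation[OF pointed_id, of 0] gmap_id[OF law_rpow_closed[of 0]] by simp
next
  fix m k f v assume "pointed_map m k f \<and> v \<in> hz_elts m"
  then show "classifying_map R n r k (hz_map m k f v) = gmap R m k f n (classifying_map R n r m v)"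
    using classifying_map_natural by blast
next
  fix m k v w assume "v \<in> hz_elts m \<and> w \<in> hz_elts k"
  then show "classifying_map R n r (m * k) (hz_mul m k v w) =
      gmul R m k n (classifying_map R n r m v) (classifying_map R n r k w)"
    using classifying_map_mul by blast
qed

lemma classifying_map_sign_vec: "classifying_map R n r 2 (sign_vec 1) = r"
proof -
  have "hz_map (2 ^ 1) 2 id (sign_vec 1) = sign_vec 1" using hz_map_id[OF sign_vec_closed[of 1]] by simp
  then have "classifying_map R n r 2 (sign_vec 1) = gmap R (2 ^ 1) 2 id n (rpow R n r 1)"
    using classifying_map_presentation[OF pointed_id, of 1] by simp
  also have "\<dots> = r" using gmap_id[OF law_rpow_closed[of 1]] gmul_one_left[OF law_closed] by simp
  finally show ?thesis .
qed

end

context gamma_ring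
begin

lemma classifying_map_law:
  assumes "is_fdl R n r"
  shows "mult_map R n (classifying_map R n r)" "classifying_map R n r 2 (sign_vec 1) = r"
proof -
  interpret formal_difference_law R n r by unfold_locales (rule assms)
  show "mult_map R n (classifying_map R n r)" "classifying_map R n r 2 (sign_vec 1) = r"
    by (rule classifying_map_mult_map, rule classifying_map_sign_vec)
qed

lemma classifying_map_of_mult_map:
  assumes phi: "mult_map R n \<phi>"
  shows "classifying_map R n (\<phi> 2 (sign_vec 1)) = \<phi>"
  using classifying_map_law[OF mult_map_law[OF phi]] by (intro mult_map_eqI[OF _ phi]) simp_all

end

section \<open>Compatibility with the simplicial structure and with conjugation\<close>

text \<open>Faces, degeneracies and conjugation by a unit are of this kind; postcomposition
  with such F preserves multiplicative maps out of HZ and formal difference laws.\<close>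

definition ring_transformation :: "'a gring \<Rightarrow> nat \<Rightarrow> nat \<Rightarrow> (nat \<Rightarrow> 'a \<Rightarrow> 'a) \<Rightarrow> bool" where
  "ring_transformation R n n' F \<longleftrightarrow>
    (\<forall>m x. x \<in> gelts R m n \<longrightarrow> F m x \<in> gelts R m n') \<and>
    (\<forall>m. F m (gbase R m n) = gbase R m n') \<and>
    F 1 (gone R n) = gone R n' \<and>
    (\<forall>m k f x. pointed_map m k f \<and> x \<in> gelts R m n \<longrightarrow> F k (gmap R m k f n x) = gmap R m k f n' (F m x)) \<and>
    (\<forall>m k x y. x \<in> gelts R m n \<and> y \<in> gelts R k n \<longrightarrow>
       F (m * k) (gmul R m k n x y) = gmul R m k n' (F m x) (F k y))"

definition postcompose :: "(nat \<Rightarrow> 'a \<Rightarrow> 'a) \<Rightarrow> (nat \<Rightarrow> (nat \<Rightarrow> int) \<Rightarrow> 'a) \<Rightarrow> nat \<Rightarrow> (nat \<Rightarrow> int) \<Rightarrow> 'a" where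
  "postcompose F \<phi> = (\<lambda>m v. if v \<in> hz_elts m then F m (\<phi> m v) else undefined)"

lemma mult_map_postcompose:
  assumes phi: "mult_map R n \<phi>" and F: "ring_transformation R n n' F"
  shows "mult_map R n' (postcompose F \<phi>)"
proof -
  have closed: "\<And>m v. v \<in> hz_elts m \<Longrightarrow> \<phi> m v \<in> gelts R m n"
    and natural: "\<And>m k f v. pointed_map m k f \<Longrightarrow> v \<in> hz_elts m \<Longrightarrow> \<phi> k (hz_map m k f v) = gmap R m k f n (\<phi> m v)"
    and mul: "\<And>m k v w. v \<in> hz_elts m \<Longrightarrow> w \<in> hz_elts k \<Longrightarrow> \<phi> (m * k) (hz_mul m k v w) = gmul R m k n (\<phi> m v) (\<phi> k w)"
    and zero: "\<And>m. \<phi> m (\<lambda>_. 0) = gbase R m n" and one: "\<phi> 1 hz_one = gone R n"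
    using phi unfolding mult_map_def by blast+
  show ?thesis
    unfolding mult_map_def postcompose_def
    using F closed natural mul zero one hz_map_closed hz_mul_closed hz_zero_closed hz_one_closed
    unfolding ring_transformation_def by simp
qed

context gamma_ring
begin

lemma face_transformation:
  assumes "1 \<le> n" "i \<le> n"
  shows "ring_transformation R n (n - 1) (\<lambda>m. gface R m n i)"
  unfolding ring_transformation_def using assms face_closed face_base face_one face_gmap face_gmul by simp

lemma deg_transformation:
  assumes "i \<le> n"
  shows "ring_transformation R n (Suc n) (\<lambda>m. gdeg R m n i)"
  unfolding ring_transformation_def using assms deg_closed deg_base deg_one deg_gmap deg_gmul by simp

lemma inverse_unique:
  assumes a: "a \<in> gelts R 1 n" and b: "b \<in> gelts R 1 n" and b': "b' \<in> gelts R 1 n"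
    and ba: "gmul R 1 1 n b a = gone R n" and ab': "gmul R 1 1 n a b' = gone R n"
  shows "b = b'"
proof -
  have "b = gmul R 1 1 n b (gmul R 1 1 n a b')" using ab' gmul_one_right[OF b] by simp
  also have "\<dots> = gmul R 1 1 n (gmul R 1 1 n b a) b'" using gmul_assoc[OF b a b'] by simp
  also have "\<dots> = b'" using ba gmul_one_left[OF b'] by simp
  finally show ?thesis .
qed

lemma unit_inverse:
  assumes a: "a \<in> units R n"
  shows "ginv R n a \<in> gelts R 1 n" "gmul R 1 1 n a (ginv R n a) = gone R n" "gmul R 1 1 n (ginv R n a) a = gone R n"
proof -
  obtain b where b: "b \<in> gelts R 1 n" "gmul R 1 1 n a b = gone R n" "gmul R 1 1 n b a = gone R n"
    using a unfolding units_def by blast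
  have a1: "a \<in> gelts R 1 n" using a unfolding units_def by blast
  have "ginv R n a = b" unfolding ginv_def
    by (rule the_equality) (use b a1 inverse_unique in blast)+
  then show "ginv R n a \<in> gelts R 1 n" "gmul R 1 1 n a (ginv R n a) = gone R n" "gmul R 1 1 n (ginv R n a) a = gone R n"
    using b by auto
qed

lemma unit_face: "a \<in> units R n \<Longrightarrow> 1 \<le> n \<Longrightarrow> i \<le> n \<Longrightarrow> gface R 1 n i a \<in> units R (n - 1)"
proof -
  assume a: "a \<in> units R n" and ni: "1 \<le> n" "i \<le> n"
  obtain b where b: "b \<in> gelts R 1 n" "gmul R 1 1 n a b = gone R n" "gmul R 1 1 n b a = gone R n"
    using a unfolding units_def by blast
  have a1: "a \<in> gelts R 1 n" using a unfolding units_def by blast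
  have "gmul R 1 1 (n - 1) (gface R 1 n i a) (gface R 1 n i b) = gone R (n - 1)"
    using face_gmul[OF ni a1 b(1)] b(2) face_one[OF ni] by simp
  moreover have "gmul R 1 1 (n - 1) (gface R 1 n i b) (gface R 1 n i a) = gone R (n - 1)"
    using face_gmul[OF ni b(1) a1] b(3) face_one[OF ni] by simp
  ultimately show ?thesis unfolding units_def using face_closed[OF ni a1] face_closed[OF ni b(1)] by blast
qed

text \<open>Multiplication by elements of R[1] on either side commutes with push-forwards,
  since [1] /\ f and f /\ [1] are f.\<close>

lemma gmap_left_mul:
  assumes f: "pointed_map m k f" and a: "a \<in> gelts R 1 n" and y: "y \<in> gelts R m n"
  shows "gmap R m k f n (gmul R 1 m n a y) = gmul R 1 k n a (gmap R m k f n y)"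
proof -
  have ay: "gmul R 1 m n a y \<in> gelts R m n" using gmul_closed[OF a y] by simp
  have "gmap R m k (smash_map 1 m 1 id f) n (gmul R 1 m n a y) = gmap R m k f n (gmul R 1 m n a y)"
  proof (rule gmap_cong[OF _ ay])
    fix p assume "p \<le> m"
    then show "smash_map 1 m 1 id f p = f p"
      using f unfolding smash_map_def pointed_map_def Let_def by (cases "p = 0") auto
  qed
  moreover have "gmap R (1 * m) (1 * k) (smash_map 1 m 1 id f) n (gmul R 1 m n a y) =
      gmul R 1 k n (gmap R 1 1 id n a) (gmap R m k f n y)"
    by (rule gmap_gmul[OF pointed_id f a y])
  ultimately show ?thesis using gmap_id[OF a] by simp
qed

lemma gmap_right_mul:
  assumes f: "pointed_map m k f" and b: "b \<in> gelts R 1 n" and y: "y \<in> gelts R m n"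
  shows "gmap R m k f n (gmul R m 1 n y b) = gmul R k 1 n (gmap R m k f n y) b"
proof -
  have yb: "gmul R m 1 n y b \<in> gelts R m n" using gmul_closed[OF y b] by simp
  have "gmap R m k (smash_map m 1 k f id) n (gmul R m 1 n y b) = gmap R m k f n (gmul R m 1 n y b)"
  proof (rule gmap_cong[OF _ yb])
    fix p assume p: "p \<le> m"
    show "smash_map m 1 k f id p = f p"
    proof (cases "p = 0")
      case False
      then have "(p - 1) mod m = p - 1" "(p - 1) div m = 0" using p by auto
      then show ?thesis using False p unfolding smash_map_def Let_def by auto
    qed (use f in \<open>simp add: smash_map_def pointed_map_def\<close>)
  qed
  moreover have "gmap R (m * 1) (k * 1) (smash_map m 1 k f id) n (gmul R m 1 n y b) =
      gmul R k 1 n (gmap R m k f n y) (gmap R 1 1 id n b)"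
    by (rule gmap_gmul[OF f pointed_id y b])
  ultimately show ?thesis using gmap_id[OF b] by simp
qed

lemma conjugation_mul:
  assumes x: "x \<in> gelts R m n" and y: "y \<in> gelts R k n" and a: "a \<in> gelts R 1 n" and b: "b \<in> gelts R 1 n"
    and ba: "gmul R 1 1 n b a = gone R n"
  shows "gmul R m k n (gmul R m 1 n (gmul R 1 m n a x) b) (gmul R k 1 n (gmul R 1 k n a y) b) =
         gmul R (m * k) 1 n (gmul R 1 (m * k) n a (gmul R m k n x y)) b"
proof -
  have ax: "gmul R 1 m n a x \<in> gelts R m n" using gmul_closed[OF a x] by simp
  have ay: "gmul R 1 k n a y \<in> gelts R k n" using gmul_closed[OF a y] by simp
  have ayb: "gmul R k 1 n (gmul R 1 k n a y) b \<in> gelts R k n" using gmul_closed[OF ay b] by simp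
  have cancel: "gmul R 1 k n b (gmul R 1 k n a y) = y" using gmul_assoc[OF b a y] ba gmul_one_left[OF y] by simp
  have "gmul R m k n (gmul R m 1 n (gmul R 1 m n a x) b) (gmul R k 1 n (gmul R 1 k n a y) b)
      = gmul R m k n (gmul R 1 m n a x) (gmul R 1 k n b (gmul R k 1 n (gmul R 1 k n a y) b))"
    using gmul_assoc[OF ax b ayb] by simp
  also have "gmul R 1 k n b (gmul R k 1 n (gmul R 1 k n a y) b) = gmul R k 1 n y b"
    using gmul_assoc[OF b ay b] cancel by simp
  also have "gmul R m k n (gmul R 1 m n a x) (gmul R k 1 n y b) = gmul R (m * k) 1 n (gmul R m k n (gmul R 1 m n a x) y) b"
    using gmul_assoc[OF ax y b] by simp
  also have "gmul R m k n (gmul R 1 m n a x) y = gmul R 1 (m * k) n a (gmul R m k n x y)"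
    using gmul_assoc[OF a x y] by simp
  finally show ?thesis .
qed

lemma conj_transformation:
  assumes a: "a \<in> units R n"
  shows "ring_transformation R n n (\<lambda>m x. gmul R m 1 n (gmul R 1 m n a x) (ginv R n a))"
proof -
  note b = unit_inverse[OF a]
  have a1: "a \<in> gelts R 1 n" using a unfolding units_def by blast
  have "gmul R 1 1 n (gmul R 1 1 n a (gone R n)) (ginv R n a) = gone R n"
    using gmul_one_right[OF a1] b(2) by simp
  moreover have "gmul R m 1 n (gmul R 1 m n a (gbase R m n)) (ginv R n a) = gbase R m n" for m
    using gmul_base_right[OF a1, of m] gmul_base_left[OF b(1), of m] by simp
  ultimately show ?thesis
    unfolding ring_transformation_def
    using gmul_closed[OF gmul_closed[OF a1] b(1)] gmap_left_mul[OF _ a1] gmap_right_mul[OF _ b(1)]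
      gmul_closed[OF a1] conjugation_mul[OF _ _ a1 b(1) b(3)] by simp
qed

end

lemma hom_face_postcompose: "sface (hom_sset R) n i \<phi> = postcompose (\<lambda>m. gface R m n i) \<phi>"
  unfolding hom_sset_def postcompose_def by simp

lemma hom_deg_postcompose: "sdeg (hom_sset R) n i \<phi> = postcompose (\<lambda>m. gdeg R m n i) \<phi>"
  unfolding hom_sset_def postcompose_def by simp

lemma hom_act_postcompose:
  "hom_act R n a \<phi> = postcompose (\<lambda>m x. gmul R m 1 n (gmul R 1 m n a x) (ginv R n a)) \<phi>"
  unfolding hom_act_def postcompose_def by simp

context gamma_ring
begin

lemma classifying_map_transformation:
  assumes r: "is_fdl R n r" and F: "ring_transformation R n n' F"
  shows "is_fdl R n' (F 2 r)" "classifying_map R n' (F 2 r) = postcompose F (classifying_map R n r)"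
proof -
  note law = classifying_map_law[OF r]
  have psi: "mult_map R n' (postcompose F (classifying_map R n r))" by (rule mult_map_postcompose[OF law(1) F])
  have "postcompose F (classifying_map R n r) 2 (sign_vec 1) = F 2 r"
    using law(2) sign_vec_closed[of 1] unfolding postcompose_def by simp
  then show "is_fdl R n' (F 2 r)" "classifying_map R n' (F 2 r) = postcompose F (classifying_map R n r)"
    using mult_map_law[OF psi] classifying_map_of_mult_map[OF psi] by simp_all
qed

end

section \<open>Homotopy orbits\<close>

text \<open>An isomorphism of G-simplicial sets (levelwise bijective, compatible with faces,
  degeneracies and the actions) induces an isomorphism of homotopy orbits, by acting on
  the last coordinate of (g_1, ..., g_n; x).\<close>

lemma hoorb_iso:
  fixes F :: "nat \<Rightarrow> 'b \<Rightarrow> 'c"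
  assumes bij: "\<And>n. bij_betw (F n) (scar X n) (scar Y n)"
    and X_face: "\<And>n i x. 1 \<le> n \<Longrightarrow> i \<le> n \<Longrightarrow> x \<in> scar X n \<Longrightarrow> sface X n i x \<in> scar X (n - 1)"
    and G_face: "\<And>n i g. 1 \<le> n \<Longrightarrow> i \<le> n \<Longrightarrow> g \<in> scar G n \<Longrightarrow> sface G n i g \<in> scar G (n - 1)"
    and face: "\<And>n i x. 1 \<le> n \<Longrightarrow> i \<le> n \<Longrightarrow> x \<in> scar X n \<Longrightarrow> F (n - 1) (sface X n i x) = sface Y n i (F n x)"
    and deg: "\<And>n i x. i \<le> n \<Longrightarrow> x \<in> scar X n \<Longrightarrow> F (Suc n) (sdeg X n i x) = sdeg Y n i (F n x)"
    and equivariant: "\<And>n g x. g \<in> scar G n \<Longrightarrow> x \<in> scar X n \<Longrightarrow> F n (actX n g x) = actY n g (F n x)"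
  shows "sset_iso (hoorb X G gm ge actX) (hoorb Y G gm ge actY)"
  unfolding sset_iso_def
proof (intro exI[of _ "\<lambda>n. map_prod id (F n)"] conjI allI impI)
  let ?gs = "\<lambda>n. {gs. length gs = n \<and> set gs \<subseteq> scar G n}"
  have car: "scar (hoorb Z G gm ge act) n = ?gs n \<times> scar Z n" for Z :: "'d sset" and act n
    unfolding hoorb_def by auto
  fix n
  show "bij_betw (map_prod id (F n)) (scar (hoorb X G gm ge actX) n) (scar (hoorb Y G gm ge actY) n)"
    unfolding car by (rule bij_betw_map_prod[OF bij_betw_id bij])
next
  fix n i y assume a: "1 \<le> n \<and> i \<le> n \<and> y \<in> scar (hoorb X G gm ge actX) n"
  obtain gs x where y: "y = (gs, x)" by force
  have gs: "length gs = n" "set gs \<subseteq> scar G n" and x: "x \<in> scar X n" and ni: "1 \<le> n" "i \<le> n"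
    using a unfolding y hoorb_def by auto
  have "last (map (sface G n i) gs) \<in> scar G (n - 1)"
  proof -
    have "gs \<noteq> []" using gs ni by auto
    then have "last gs \<in> scar G n" using gs(2) last_in_set by blast
    then show ?thesis using G_face[OF ni] \<open>gs \<noteq> []\<close> by (simp add: last_map)
  qed
  then show "map_prod id (F (n - 1)) (sface (hoorb X G gm ge actX) n i y) =
      sface (hoorb Y G gm ge actY) n i (map_prod id (F n) y)"
    unfolding y using face[OF ni x] equivariant[OF _ X_face[OF ni x]] ni
    by (cases "i = 0"; cases "i = n") (simp_all add: hoorb_def Let_def)
next
  fix n i y assume a: "i \<le> n \<and> y \<in> scar (hoorb X G gm ge actX) n"
  obtain gs x where y: "y = (gs, x)" by force
  have "x \<in> scar X n" using a unfolding y hoorb_def by auto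
  then show "map_prod id (F (Suc n)) (sdeg (hoorb X G gm ge actX) n i y) =
      sdeg (hoorb Y G gm ge actY) n i (map_prod id (F n) y)"
    unfolding y using deg a by (simp add: hoorb_def Let_def)
qed

theorem theorem3p9:
  fixes R :: "'a gring"
  assumes "is_gamma_ring R"
  shows "sset_iso (hG R (fdl_sset R) (fdl_act R)) (hG R (hom_sset R) (hom_act R))"
  unfolding hG_def
proof (rule hoorb_iso[where F = "classifying_map R"])
  interpret gamma_ring R by unfold_locales (rule assms)
  fix n i x
  have car: "scar (fdl_sset R) n = {r. is_fdl R n r}" "scar (hom_sset R) n = {\<phi>. mult_map R n \<phi>}"
    by (simp_all add: fdl_sset_def hom_sset_def)
  show "bij_betw (classifying_map R n) (scar (fdl_sset R) n) (scar (hom_sset R) n)"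
    unfolding car
    by (rule bij_betw_byWitness[where f' = "\<lambda>\<phi>. \<phi> 2 (sign_vec 1)"])
      (use classifying_map_law classifying_map_of_mult_map mult_map_law in blast)+
  show "g \<in> scar (unit_group R) n \<Longrightarrow> 1 \<le> n \<Longrightarrow> i \<le> n \<Longrightarrow> sface (unit_group R) n i g \<in> scar (unit_group R) (n - 1)"
    for g using unit_face[of g n i] unfolding unit_group_def by simp
  assume x: "x \<in> scar (fdl_sset R) n"
  then have r: "is_fdl R n x" unfolding fdl_sset_def by simp
  show "sface (fdl_sset R) n i x \<in> scar (fdl_sset R) (n - 1)" if "1 \<le> n" "i \<le> n"
    using classifying_map_transformation(1)[OF r face_transformation[OF that]] unfolding fdl_sset_def by simp
  show "classifying_map R (n - 1) (sface (fdl_sset R) n i x) = sface (hom_sset R) n i (classifying_map R n x)"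
    if "1 \<le> n" "i \<le> n"
    using classifying_map_transformation(2)[OF r face_transformation[OF that]]
    unfolding fdl_sset_def hom_face_postcompose by simp
  show "classifying_map R (Suc n) (sdeg (fdl_sset R) n i x) = sdeg (hom_sset R) n i (classifying_map R n x)"
    if "i \<le> n"
    using classifying_map_transformation(2)[OF r deg_transformation[OF that]]
    unfolding fdl_sset_def hom_deg_postcompose by simp
  show "classifying_map R n (fdl_act R n g x) = hom_act R n g (classifying_map R n x)"
    if "g \<in> scar (unit_group R) n" for g
    using classifying_map_transformation(2)[OF r conj_transformation[of g n]] that
    unfolding fdl_act_def hom_act_postcompose unit_group_def by simp
qed

end
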